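(* Consider the decentralized problem and the SPDS algorithm described in the context, with positive integers $T_k,c_k$, positive reals $\beta_k,p_k,q_k^t,\eta_k^t$ and nonnegative reals $\lambda_k,\tau_k,\alpha_k^t$. Suppose: (i) for every $k\ge2$: $\beta_k\tau_k\le\beta_{k-1}(\tau_{k-1}+1)$, $\beta_{k-1}=\beta_k\lambda_k$, $2\tilde L\lambda_k\le p_{k-1}\tau_k$, $\beta_kT_{k-1}\alpha_k^1=\beta_{k-1}T_k$, $\alpha_k^1\|\mathcal A\|^2\le\eta_{k-1}^{T_{k-1}}q_k^1$, $\beta_kT_{k-1}q_k^1\le\beta_{k-1}T_kq_{k-1}^{T_{k-1}}$, $\beta_kT_{k-1}(\eta_k^1+p_kT_k)\le\beta_{k-1}T_k(\mu+\eta_{k-1}^{T_{k-1}}+p_{k-1})$; (ii) for every $k\ge1$, $t\ge2$: $\alpha_k^t=1$, $\|\mathcal A\|^2\le\eta_k^{t-1}q_k^t$, $q_k^t\le q_k^{t-1}$, $\eta_k^t\le\mu+\eta_k^{t-1}+p_k$; (iii) $\tau_1=0$, $p_N(\tau_N+1)\ge2\tilde L$, $\eta_N^{T_N}q_N^{T_N}\ge\|\mathcal A\|^2$. Then $$\mathbb E[f(\overline x_N)-f(x^* )]\le\Big(\sum_{k=1}^N\beta_k\Big)^{-1}\Big[\frac{\beta_1}{2}\Big(\frac{\eta_1^1}{T_1}+p_1\Big)\|x_0-x^*\|_2^2+\sum_{k=1}^N\frac{\beta_k\sigma^2}{p_kc_k}\Big],$$ $$\mathbb E[\|\mathcal A\overline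 x_N\|_2]\le\Big(\sum_{k=1}^N\beta_k\Big)^{-1}\Big[\frac{\beta_1q_1^1}{2T_1}(\|z^*\|_2+1)^2+\frac{\beta_1}{2}\Big(\frac{\eta_1^1}{T_1}+p_1\Big)\|x_0-x^*\|_2^2+\sum_{k=1}^N\frac{\beta_k\sigma^2}{p_kc_k}\Big].$$
   Context: Setting (Euclidean). $G=(\mathcal N,\mathcal E)$ is a connected undirected graph on $\{1,\dots,m\}$; $X^{(i)}\subseteq\mathbb R^d$ closed convex; $\mathcal X=X^{(1)}\times\cdots\times X^{(m)}\subseteq\mathbb R^{md}$; all norms are Euclidean $\|\cdot\|_2$. $f=\tilde f+\mu\nu$ with $\tilde f(x)=\sum_i\tilde f_i(x^{(i)})$, $\nu(x)=\sum_i\nu_i(x^{(i)})$, $\mu\ge0$, each $\tilde f_i$ convex differentiable with $\nabla\tilde f_i$ $\tilde L$-Lipschitz w.r.t. $\|\cdot\|_2$, each $\nu_i$ $1$-strongly convex w.r.t. $\|\cdot\|_2$. $\mathcal A$ is $\mathcal L\otimes I_d$ ($\mathcal L$ the graph Laplacian) or $\mathcal B^\top\otimes I_d$ ($\mathcal B$ an oriented incidence matrix); $\|\mathcal A\|$ its spectral norm. A saddle point $(x^*,z^* )$ of $\min_{x\in\mathcal X}\max_zf(x)+\langle\mathcal Ax,z\rangle$ is assumed to exist. SPDS algorithm: choose $x_0,\underline x_0\in\mathcal X$, $\hat x_0=x_{-1}=x_0$, $z_0=0$. For $k=1,\dots,N$: $\tilde x_k=x_{k-1}+\lambda_k(\hat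 x_{k-1}-x_{k-2})$; $\underline x_k=(\tilde x_k+\tau_k\underline x_{k-1})/(1+\tau_k)$; $y_k=\nabla\tilde f(\underline x_k)$; a random vector $v_k$ is obtained (e.g. mini-batch of $c_k$ stochastic gradients per agent) with $\mathbb E[v_k\mid\text{past}]=y_k$ and $\mathbb E[\|v_k-y_k\|_2^2\mid\text{past}]\le\sigma^2/c_k$, where "past" is all randomness before iteration $k$; $x_k^0=x_{k-1}$, $z_k^0=z_{k-1}$, $x_k^{-1}=x_{k-1}^{T_{k-1}-1}$ ($x_1^{-1}=x_0$); for $t=1,\dots,T_k$: $\tilde u_k^t=x_k^{t-1}+\alpha_k^t(x_k^{t-1}-x_k^{t-2})$, $z_k^t=z_k^{t-1}+\mathcal A\tilde u_k^t/q_k^t$, $x_k^t=\arg\min_{x\in\mathcal X}\mu\nu(x)+\langle v_k+\mathcal A^\top z_k^t,x\rangle+\frac{\eta_k^t}{2}\|x_k^{t-1}-x\|_2^2+\frac{p_k}{2}\|x_{k-1}-x\|_2^2$; $x_k=x_k^{T_k}$, $z_k=z_k^{T_k}$, $\hat x_k=\frac1{T_k}\sum_tx_k^t$. Output $\overline x_N=(\sum_k\beta_k)^{-1}\sum_k\beta_k\hat x_k$. *)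

theory Defs
  imports "HOL-Probability.Probability"
begin

definition strongly_convex_on :: "'v::real_normed_vector set \<Rightarrow> real \<Rightarrow> ('v \<Rightarrow> real) \<Rightarrow> bool" where
  "strongly_convex_on S m g \<longleftrightarrow> convex S \<and>
     (\<forall>x\<in>S. \<forall>y\<in>S. \<forall>\<theta>::real. 0 \<le> \<theta> \<and> \<theta> \<le> 1 \<longrightarrow>
        g (\<theta> *\<^sub>R x + (1 - \<theta>) *\<^sub>R y)
          \<le> \<theta> * g x + (1 - \<theta>) * g y - m / 2 * \<theta> * (1 - \<theta>) * (norm (x - y))\<^sup>2)"

definition connected_graph :: "('n \<times> 'n) set \<Rightarrow> bool" where
  "connected_graph E \<longleftrightarrow> sym E \<and> (\<forall>a. (a, a) \<notin> E) \<and> (\<forall>a b. (a, b) \<in> E\<^sup>*)"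

definition laplacian :: "('n \<times> 'n) set \<Rightarrow> 'n \<Rightarrow> 'n \<Rightarrow> real" where
  "laplacian E a b = (if a = b then real (card {c. (a, c) \<in> E})
                      else if (a, b) \<in> E then -1 else 0)"

text \<open>The matrix K (rows indexed by the dual index type 'm, columns by vertices) is the graph
  Laplacian, the dual coordinates being labelled by vertices through a bijection h.\<close>
definition is_laplacian_matrix :: "('n \<times> 'n) set \<Rightarrow> ('m \<Rightarrow> 'n \<Rightarrow> real) \<Rightarrow> bool" where
  "is_laplacian_matrix E K \<longleftrightarrow>
     (\<exists>h :: 'm \<Rightarrow> 'n. bij h \<and> (\<forall>j i. K j i = laplacian E (h j) i))"

text \<open>The matrix K is the transpose of an oriented incidence matrix B of the graph:
  the rows of K (columns of B) are indexed by the edges, each undirected edge {a,b}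
  appearing exactly once with some orientation (e j) = (a,b); B has entry +1 at a, -1 at b.\<close>
definition is_incidence_transpose :: "('n \<times> 'n) set \<Rightarrow> ('m \<Rightarrow> 'n \<Rightarrow> real) \<Rightarrow> bool" where
  "is_incidence_transpose E K \<longleftrightarrow>
     (\<exists>e :: 'm \<Rightarrow> 'n \<times> 'n. inj e \<and> range e \<subseteq> E
        \<and> (\<forall>a b. (a, b) \<in> E \<longrightarrow> (a, b) \<in> range e \<or> (b, a) \<in> range e)
        \<and> (\<forall>a b. (a, b) \<in> range e \<longrightarrow> (b, a) \<notin> range e)
        \<and> (\<forall>j i. K j i = (if i = fst (e j) then 1 else if i = snd (e j) then -1 else 0)))"

text \<open>Kronecker product (K \<otimes> I_d) acting on stacked vectors.\<close>
definition kron_op :: "('m \<Rightarrow> 'n \<Rightarrow> real) \<Rightarrow> real^'d^'n::finite \<Rightarrow> real^'d^'m" where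
  "kron_op K x = (\<chi> j. \<Sum>i\<in>UNIV. K j i *\<^sub>R (x $ i))"

definition transp_mat :: "('m \<Rightarrow> 'n \<Rightarrow> real) \<Rightarrow> 'n \<Rightarrow> 'm \<Rightarrow> real" where
  "transp_mat K i j = K j i"

definition is_saddle_point ::
  "'x::real_inner set \<Rightarrow> ('x \<Rightarrow> real) \<Rightarrow> ('x \<Rightarrow> 'z::real_inner) \<Rightarrow> 'x \<Rightarrow> 'z \<Rightarrow> bool" where
  "is_saddle_point X f A xs zs \<longleftrightarrow> xs \<in> X \<and>
     (\<forall>z. f xs + inner (A xs) z \<le> f xs + inner (A xs) zs) \<and>
     (\<forall>x\<in>X. f xs + inner (A xs) zs \<le> f x + inner (A x) zs)"

definition spds_xout :: "'v \<Rightarrow> (nat \<Rightarrow> nat) \<Rightarrow> (nat \<Rightarrow> nat \<Rightarrow> 'a \<Rightarrow> 'v) \<Rightarrow> nat \<Rightarrow> 'a \<Rightarrow> 'v" where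
  "spds_xout x0 T xs k \<omega> = (if k = 0 then x0 else xs k (T k) \<omega>)"

definition spds_xhat :: "'v::real_vector \<Rightarrow> (nat \<Rightarrow> nat) \<Rightarrow> (nat \<Rightarrow> nat \<Rightarrow> 'a \<Rightarrow> 'v) \<Rightarrow> nat \<Rightarrow> 'a \<Rightarrow> 'v" where
  "spds_xhat x0 T xs k \<omega> =
     (if k = 0 then x0 else (1 / real (T k)) *\<^sub>R (\<Sum>t\<in>{1..T k}. xs k t \<omega>))"

definition spds_xprev :: "'v \<Rightarrow> (nat \<Rightarrow> nat) \<Rightarrow> (nat \<Rightarrow> nat \<Rightarrow> 'a \<Rightarrow> 'v) \<Rightarrow> nat \<Rightarrow> 'a \<Rightarrow> 'v" where
  "spds_xprev x0 T xs k \<omega> = (if k \<le> 1 then x0 else xs (k - 1) (T (k - 1) - 1) \<omega>)"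

text \<open>x~_k = x_{k-1} + \<lambda>_k (x^_{k-1} - x_{k-2}), with x_{-1} = x^_0 = x_0
  (nat subtraction makes k - 2 = 0 for k = 1).\<close>
definition spds_xtilde :: "'v::real_vector \<Rightarrow> (nat \<Rightarrow> nat) \<Rightarrow> (nat \<Rightarrow> nat \<Rightarrow> 'a \<Rightarrow> 'v) \<Rightarrow> (nat \<Rightarrow> real) \<Rightarrow> nat \<Rightarrow> 'a \<Rightarrow> 'v" where
  "spds_xtilde x0 T xs lam k \<omega> = spds_xout x0 T xs (k - 1) \<omega>
      + lam k *\<^sub>R (spds_xhat x0 T xs (k - 1) \<omega> - spds_xout x0 T xs (k - 2) \<omega>)"

end

theory Submission
  imports Defs
begin

text \<open>
  Fix a sample \<open>\<omega>\<close>; then the run is deterministic and two potential arguments run side by side.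
  Inside round \<open>k\<close>, three-point inequalities for the proximal primal steps and a Young estimate
  for the extrapolated dual steps telescope a potential in \<open>(x\<^sub>k\<^sup>t, z\<^sub>k\<^sup>t)\<close>; conditions (i)-(iii)
  chain these potentials across rounds and make the last one nonnegative, so by Jensen the
  averages \<open>x\<^sup>^\<^sub>k\<close> have a small gap for the objective linearised by \<open>v\<^sub>k\<close>.  Across rounds, the
  momentum point \<open>x\<^sub>_\<^sub>k\<close> splits the error of linearising the smooth part at \<open>x\<^sub>_\<^sub>k\<close> into Bregman
  divergences that telescope, up to \<open>p\<^sub>k/4 \<parallel>x\<^sup>^\<^sub>k - x\<^sub>k\<^sub>-\<^sub>1\<parallel>\<^sup>2\<close>, which the prox term absorbs.
  Replacing \<open>\<nabla>f~(x\<^sub>_\<^sub>k)\<close> by \<open>v\<^sub>k\<close> costs \<open>\<parallel>\<delta>\<^sub>k\<parallel>\<^sup>2/p\<^sub>k + \<langle>\<delta>\<^sub>k, x\<^sup>* - x\<^sub>k\<^sub>-\<^sub>1\<rangle>\<close> with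
  \<open>\<delta>\<^sub>k = v\<^sub>k - \<nabla>f~(x\<^sub>_\<^sub>k)\<close>.  Since \<open>x\<^sub>k\<^sub>-\<^sub>1\<close> and \<open>x\<^sub>_\<^sub>k\<close> are square-integrable and
  \<open>\<F>\<^sub>k\<^sub>-\<^sub>1\<close>-measurable (every proximal step is a Lipschitz function of measurable data), the
  inner product has mean zero and the first term mean at most \<open>\<sigma>\<^sup>2/(p\<^sub>k c\<^sub>k)\<close>.  Testing the
  resulting bound at \<open>z = 0\<close> gives the gap estimate; testing it at
  \<open>z = (\<parallel>z\<^sup>*\<parallel> + 1) A x\<^sup>- / \<parallel>A x\<^sup>-\<parallel>\<close> and using \<open>f(x\<^sup>-) - f(x\<^sup>*) \<ge> -\<parallel>z\<^sup>*\<parallel> \<parallel>A x\<^sup>-\<parallel>\<close> from the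
  saddle point gives the feasibility estimate.
\<close>

section \<open>Smooth convex functions\<close>

definition bregman_divergence :: "('a::real_inner \<Rightarrow> real) \<Rightarrow> ('a \<Rightarrow> 'a) \<Rightarrow> 'a \<Rightarrow> 'a \<Rightarrow> real"
  where "bregman_divergence f G u w = f u - f w - inner (G w) (u - w)"

lemma has_real_derivative_along_line:
  fixes f :: "'a::real_inner \<Rightarrow> real"
  assumes "(f has_derivative (\<lambda>h. inner g h)) (at (a + s *\<^sub>R d))"
  shows "((\<lambda>t. f (a + t *\<^sub>R d)) has_real_derivative inner g d) (at s)"
proof -
  have "((\<lambda>t. a + t *\<^sub>R d) has_derivative (\<lambda>t. t *\<^sub>R d)) (at s)"
    by (auto intro!: derivative_eq_intros)
  from has_derivative_compose[OF this assms]
  have "((\<lambda>t. f (a + t *\<^sub>R d)) has_derivative (\<lambda>t. inner g (t *\<^sub>R d))) (at s)"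
    by (simp add: o_def)
  then show ?thesis
    by (simp add: has_field_derivative_def mult.commute[of _ "inner g d"])
qed

lemma bregman_divergence_le_lipschitz_gradient:
  fixes f :: "'a::real_inner \<Rightarrow> real"
  assumes der: "\<And>u. (f has_derivative (\<lambda>h. inner (G u) h)) (at u)"
    and lip: "\<And>u w. norm (G u - G w) \<le> L * norm (u - w)"
  shows "bregman_divergence f G b a \<le> L / 2 * (norm (b - a))\<^sup>2"
proof -
  define d where "d = b - a"
  define h where "h t = f (a + t *\<^sub>R d) - t * inner (G a) d - L / 2 * t\<^sup>2 * (norm d)\<^sup>2" for t
  have "h 1 \<le> h 0"
  proof (rule DERIV_nonpos_imp_nonincreasing[of 0 1 h])
    fix t :: real assume t: "0 \<le> t" "t \<le> 1"
    have "((\<lambda>t. f (a + t *\<^sub>R d)) has_real_derivative inner (G (a + t *\<^sub>R d)) d) (at t)"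
      by (rule has_real_derivative_along_line[OF der])
    then have "(h has_real_derivative
        inner (G (a + t *\<^sub>R d) - G a) d - L * t * (norm d)\<^sup>2) (at t)"
      unfolding h_def by (auto intro!: derivative_eq_intros simp: inner_diff_left)
    moreover have "inner (G (a + t *\<^sub>R d) - G a) d \<le> L * t * (norm d)\<^sup>2"
    proof -
      have "inner (G (a + t *\<^sub>R d) - G a) d \<le> norm (G (a + t *\<^sub>R d) - G a) * norm d"
        by (rule norm_cauchy_schwarz)
      also have "\<dots> \<le> (L * norm (t *\<^sub>R d)) * norm d"
        using lip[of "a + t *\<^sub>R d" a] by (intro mult_right_mono) auto
      finally show ?thesis
        using t by (simp add: power2_eq_square mult.assoc)
    qed
    ultimately show "\<exists>y. (h has_real_derivative y) (at t) \<and> y \<le> 0"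
      by (intro exI[of _ "inner (G (a + t *\<^sub>R d) - G a) d - L * t * (norm d)\<^sup>2"]) simp
  qed simp
  then show ?thesis
    unfolding h_def d_def bregman_divergence_def by simp
qed

lemma bregman_divergence_nonneg:
  fixes f :: "'a::real_inner \<Rightarrow> real"
  assumes cvx: "convex_on UNIV f"
    and der: "\<And>u. (f has_derivative (\<lambda>h. inner (G u) h)) (at u)"
  shows "0 \<le> bregman_divergence f G u w"
proof -
  define h where "h t = f (w + t *\<^sub>R (u - w))" for t
  have "convex_on UNIV h"
  proof (rule convex_onI)
    fix t x y :: real assume t: "0 < t" "t < 1"
    have "w + ((1 - t) *\<^sub>R x + t *\<^sub>R y) *\<^sub>R (u - w)
        = (1 - t) *\<^sub>R (w + x *\<^sub>R (u - w)) + t *\<^sub>R (w + y *\<^sub>R (u - w))"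
      by (simp add: algebra_simps)
    then show "h ((1 - t) *\<^sub>R x + t *\<^sub>R y) \<le> (1 - t) * h x + t * h y"
      unfolding h_def using convex_onD[OF cvx, of t] t by simp
  qed simp
  moreover have "(h has_real_derivative inner (G w) (u - w)) (at 0)"
    unfolding h_def using has_real_derivative_along_line[of f "G w" w 0 "u - w"] der[of w] by simp
  ultimately have "inner (G w) (u - w) * (1 - 0) \<le> h 1 - h 0"
    by (intro convex_on_imp_above_tangent) auto
  then show ?thesis
    unfolding h_def bregman_divergence_def by simp
qed

text \<open>Minimising the tilted function \<open>f - \<langle>G w, _\<rangle>\<close> (minimal at \<open>w\<close>) by one gradient step
  from \<open>u\<close> with step \<open>1/L\<close> gains at least \<open>\<parallel>G u - G w\<parallel>\<^sup>2 / (2L)\<close>.\<close>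
lemma gradient_diff_sq_le_bregman_divergence:
  fixes f :: "'a::real_inner \<Rightarrow> real"
  assumes cvx: "convex_on UNIV f"
    and der: "\<And>u. (f has_derivative (\<lambda>h. inner (G u) h)) (at u)"
    and lip: "\<And>u w. norm (G u - G w) \<le> L * norm (u - w)"
    and L: "0 \<le> L"
  shows "(norm (G u - G w))\<^sup>2 \<le> 2 * L * bregman_divergence f G u w"
proof (cases "L = 0")
  case True
  then show ?thesis using lip[of u w] by simp
next
  case False
  with L have L: "0 < L" by simp
  define \<phi> where "\<phi> x = f x - inner (G w) x" for x
  define H where "H x = G x - G w" for x
  have der\<phi>: "(\<phi> has_derivative (\<lambda>h. inner (H x) h)) (at x)" for x
    unfolding \<phi>_def H_def
    by (rule derivative_eq_intros der refl | simp add: inner_diff_left)+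
  have min: "\<phi> w \<le> \<phi> x" for x
    using bregman_divergence_nonneg[OF cvx der, of x w]
    by (simp add: bregman_divergence_def \<phi>_def inner_diff_right)
  define b where "b = u - (1 / L) *\<^sub>R H u"
  have "bregman_divergence \<phi> H b u \<le> L / 2 * (norm (b - u))\<^sup>2"
    by (rule bregman_divergence_le_lipschitz_gradient[OF der\<phi>]) (use lip in \<open>simp add: H_def\<close>)
  moreover have "b - u = - (1 / L) *\<^sub>R H u"
    by (simp add: b_def)
  ultimately have "\<phi> b \<le> \<phi> u - (norm (H u))\<^sup>2 / L + L / 2 * ((norm (H u))\<^sup>2 / L\<^sup>2)"
    by (simp add: bregman_divergence_def power2_norm_eq_inner power_divide)
  also have "\<dots> = \<phi> u - (norm (H u))\<^sup>2 / (2 * L)"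
    using L by (simp add: field_simps power2_eq_square)
  finally have "(norm (H u))\<^sup>2 / (2 * L) \<le> \<phi> u - \<phi> w"
    using min[of b] by simp
  then have "(norm (H u))\<^sup>2 \<le> 2 * L * (\<phi> u - \<phi> w)"
    using L by (simp add: field_simps)
  then show ?thesis
    by (simp add: H_def bregman_divergence_def \<phi>_def inner_diff_right algebra_simps)
qed

section \<open>Strong convexity and proximal steps\<close>

lemma strongly_convex_on_imp_convex_on:
  assumes "strongly_convex_on S m g" "0 \<le> m"
  shows "convex_on S g"
proof (rule convex_onI)
  show "convex S" using assms(1) by (simp add: strongly_convex_on_def)
next
  fix t :: real and x y assume t: "0 < t" "t < 1" and xy: "x \<in> S" "y \<in> S"
  have "g (t *\<^sub>R y + (1 - t) *\<^sub>R x)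
      \<le> t * g y + (1 - t) * g x - m / 2 * t * (1 - t) * (norm (y - x))\<^sup>2"
    using assms(1) t xy by (simp add: strongly_convex_on_def)
  moreover have "0 \<le> m / 2 * t * (1 - t) * (norm (y - x))\<^sup>2"
    using t assms(2) by simp
  ultimately show "g ((1 - t) *\<^sub>R x + t *\<^sub>R y) \<le> (1 - t) * g x + t * g y"
    by (simp add: add.commute)
qed

lemma strongly_convex_on_subset:
  "strongly_convex_on T m g \<Longrightarrow> convex S \<Longrightarrow> S \<subseteq> T \<Longrightarrow> strongly_convex_on S m g"
  unfolding strongly_convex_on_def by blast

lemma strongly_convex_on_add:
  assumes f: "strongly_convex_on S m f" and g: "strongly_convex_on S m' g"
  shows "strongly_convex_on S (m + m') (\<lambda>x. f x + g x)"
  unfolding strongly_convex_on_def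
proof (intro conjI ballI allI impI)
  show "convex S" using f by (simp add: strongly_convex_on_def)
  fix x y and \<theta> :: real assume "x \<in> S" "y \<in> S" "0 \<le> \<theta> \<and> \<theta> \<le> 1"
  then have "f (\<theta> *\<^sub>R x + (1 - \<theta>) *\<^sub>R y) \<le> \<theta> * f x + (1 - \<theta>) * f y - m / 2 * \<theta> * (1 - \<theta>) * (norm (x - y))\<^sup>2"
    "g (\<theta> *\<^sub>R x + (1 - \<theta>) *\<^sub>R y) \<le> \<theta> * g x + (1 - \<theta>) * g y - m' / 2 * \<theta> * (1 - \<theta>) * (norm (x - y))\<^sup>2"
    using f g by (simp_all add: strongly_convex_on_def)
  then show "f (\<theta> *\<^sub>R x + (1 - \<theta>) *\<^sub>R y) + g (\<theta> *\<^sub>R x + (1 - \<theta>) *\<^sub>R y)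
      \<le> \<theta> * (f x + g x) + (1 - \<theta>) * (f y + g y) - (m + m') / 2 * \<theta> * (1 - \<theta>) * (norm (x - y))\<^sup>2"
    by (simp add: field_simps)
qed

lemma strongly_convex_on_cmul:
  assumes f: "strongly_convex_on S m f" and c: "0 \<le> c"
  shows "strongly_convex_on S (c * m) (\<lambda>x. c * f x)"
  unfolding strongly_convex_on_def
proof (intro conjI ballI allI impI)
  show "convex S" using f by (simp add: strongly_convex_on_def)
  fix x y and \<theta> :: real assume "x \<in> S" "y \<in> S" "0 \<le> \<theta> \<and> \<theta> \<le> 1"
  then have "f (\<theta> *\<^sub>R x + (1 - \<theta>) *\<^sub>R y) \<le> \<theta> * f x + (1 - \<theta>) * f y - m / 2 * \<theta> * (1 - \<theta>) * (norm (x - y))\<^sup>2"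
    using f by (simp add: strongly_convex_on_def)
  from mult_left_mono[OF this c]
  show "c * f (\<theta> *\<^sub>R x + (1 - \<theta>) *\<^sub>R y)
      \<le> \<theta> * (c * f x) + (1 - \<theta>) * (c * f y) - c * m / 2 * \<theta> * (1 - \<theta>) * (norm (x - y))\<^sup>2"
    by (simp add: algebra_simps)
qed

lemma strongly_convex_on_inner:
  "convex S \<Longrightarrow> strongly_convex_on S 0 (\<lambda>x. inner g x)"
  unfolding strongly_convex_on_def by (simp add: inner_add_right)

lemma norm_sq_diff_convex_combination:
  fixes a x y :: "'a::real_inner"
  shows "(norm (a - (\<theta> *\<^sub>R x + (1 - \<theta>) *\<^sub>R y)))\<^sup>2
    = \<theta> * (norm (a - x))\<^sup>2 + (1 - \<theta>) * (norm (a - y))\<^sup>2 - \<theta> * (1 - \<theta>) * (norm (x - y))\<^sup>2"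
proof -
  have "a - (\<theta> *\<^sub>R x + (1 - \<theta>) *\<^sub>R y) = \<theta> *\<^sub>R (a - x) + (1 - \<theta>) *\<^sub>R (a - y)"
    by (simp add: algebra_simps)
  moreover have "x - y = (a - y) - (a - x)" by simp
  ultimately show ?thesis
    unfolding power2_norm_eq_inner
    by (simp add: inner_add_left inner_add_right inner_diff_left inner_diff_right
        inner_commute algebra_simps power2_eq_square)
qed

lemma strongly_convex_on_half_dist_sq:
  fixes a :: "'a::real_inner"
  shows "convex S \<Longrightarrow> strongly_convex_on S c (\<lambda>x. c / 2 * (norm (a - x))\<^sup>2)"
  unfolding strongly_convex_on_def norm_sq_diff_convex_combination
  by (auto simp: field_simps)

lemma strongly_convex_on_arg_min:
  fixes \<Phi> :: "'a::real_normed_vector \<Rightarrow> real"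
  assumes sc: "strongly_convex_on S m \<Phi>" and m: "0 \<le> m"
    and am: "is_arg_min \<Phi> (\<lambda>x. x \<in> S) xm" and x: "x \<in> S"
  shows "\<Phi> xm + m / 2 * (norm (x - xm))\<^sup>2 \<le> \<Phi> x"
proof (rule ccontr)
  define d where "d = (norm (x - xm))\<^sup>2"
  define \<epsilon> where "\<epsilon> = \<Phi> xm + m / 2 * d - \<Phi> x"
  assume "\<not> ?thesis"
  then have \<epsilon>: "0 < \<epsilon>" unfolding \<epsilon>_def d_def by simp
  have xm: "xm \<in> S" using am by (simp add: is_arg_min_def)
  have small: "\<epsilon> \<le> m * d / 2 * \<theta>" if \<theta>: "0 < \<theta>" "\<theta> \<le> 1" for \<theta>
  proof -
    have "\<theta> *\<^sub>R x + (1 - \<theta>) *\<^sub>R xm \<in> S"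
      using sc x xm \<theta> by (simp add: strongly_convex_on_def convex_def)
    then have "\<Phi> xm \<le> \<Phi> (\<theta> *\<^sub>R x + (1 - \<theta>) *\<^sub>R xm)"
      using am by (auto simp: is_arg_min_def not_less)
    also have "\<dots> \<le> \<theta> * \<Phi> x + (1 - \<theta>) * \<Phi> xm - m / 2 * \<theta> * (1 - \<theta>) * d"
      using sc x xm \<theta> unfolding strongly_convex_on_def d_def by simp
    finally have "\<theta> * \<Phi> xm \<le> \<theta> * (\<Phi> x - m / 2 * (1 - \<theta>) * d)"
      by (simp add: algebra_simps)
    then have "\<Phi> xm \<le> \<Phi> x - m / 2 * (1 - \<theta>) * d"
      using \<theta> by simp
    then show ?thesis unfolding \<epsilon>_def by (simp add: field_simps)
  qed
  have md: "0 \<le> m * d" using m by (simp add: d_def)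
  define \<theta> where "\<theta> = min 1 (\<epsilon> / (m * d + 1))"
  have "0 < \<theta>" "\<theta> \<le> 1" unfolding \<theta>_def using \<epsilon> md by auto
  from small[OF this] have "\<epsilon> \<le> m * d / 2 * \<theta>" .
  also have "\<dots> \<le> m * d / 2 * (\<epsilon> / (m * d + 1))"
    using md by (intro mult_left_mono) (auto simp: \<theta>_def)
  also have "\<dots> < \<epsilon>"
    using md \<epsilon> by (simp add: field_simps) (smt (verit) mult_nonneg_nonneg)
  finally show False by simp
qed

definition prox_objective ::
  "('a::real_inner \<Rightarrow> real) \<Rightarrow> real \<Rightarrow> 'a \<Rightarrow> real \<Rightarrow> 'a \<Rightarrow> real \<Rightarrow> 'a \<Rightarrow> 'a \<Rightarrow> real"
  where "prox_objective \<Omega> \<mu> g \<eta> a p b x =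
    \<mu> * \<Omega> x + inner g x + \<eta> / 2 * (norm (a - x))\<^sup>2 + p / 2 * (norm (b - x))\<^sup>2"

lemma strongly_convex_on_prox_objective:
  assumes "strongly_convex_on UNIV 1 \<Omega>" "0 \<le> \<mu>" "convex S"
  shows "strongly_convex_on S (\<mu> + \<eta> + p) (prox_objective \<Omega> \<mu> g \<eta> a p b)"
proof -
  have "strongly_convex_on S 1 \<Omega>"
    using assms by (blast intro: strongly_convex_on_subset)
  then have "strongly_convex_on S (\<mu> * 1 + 0 + \<eta> + p)
      (\<lambda>x. \<mu> * \<Omega> x + inner g x + \<eta> / 2 * (norm (a - x))\<^sup>2 + p / 2 * (norm (b - x))\<^sup>2)"
    using assms
    by (intro strongly_convex_on_add strongly_convex_on_cmul strongly_convex_on_inner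
        strongly_convex_on_half_dist_sq)
  then show ?thesis
    by (simp add: prox_objective_def[abs_def])
qed

lemma prox_objective_arg_min:
  assumes "strongly_convex_on UNIV 1 \<Omega>" "0 \<le> \<mu>" "0 \<le> \<eta>" "0 \<le> p" "convex S"
    and "is_arg_min (prox_objective \<Omega> \<mu> g \<eta> a p b) (\<lambda>x. x \<in> S) xm" "x \<in> S"
  shows "prox_objective \<Omega> \<mu> g \<eta> a p b xm + (\<mu> + \<eta> + p) / 2 * (norm (x - xm))\<^sup>2
    \<le> prox_objective \<Omega> \<mu> g \<eta> a p b x"
  using assms by (intro strongly_convex_on_arg_min strongly_convex_on_prox_objective) auto

lemma prox_arg_min_lipschitz:
  assumes \<Omega>: "strongly_convex_on UNIV 1 \<Omega>" "0 \<le> \<mu>" "0 \<le> \<eta>" "0 \<le> p" "convex S"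
    and am: "is_arg_min (prox_objective \<Omega> \<mu> g \<eta> a p b) (\<lambda>x. x \<in> S) xm"
    and am': "is_arg_min (prox_objective \<Omega> \<mu> g' \<eta> a' p b') (\<lambda>x. x \<in> S) xm'"
  shows "(\<mu> + \<eta> + p) * norm (xm - xm')
    \<le> norm ((g - \<eta> *\<^sub>R a - p *\<^sub>R b) - (g' - \<eta> *\<^sub>R a' - p *\<^sub>R b'))"
proof -
  define e where "e = (g - \<eta> *\<^sub>R a - p *\<^sub>R b) - (g' - \<eta> *\<^sub>R a' - p *\<^sub>R b')"
  have S: "xm \<in> S" "xm' \<in> S" using am am' by (simp_all add: is_arg_min_def)
  have diff: "prox_objective \<Omega> \<mu> g \<eta> a p b x - prox_objective \<Omega> \<mu> g' \<eta> a' p b' x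
      = inner e x + (\<eta> / 2 * ((norm a)\<^sup>2 - (norm a')\<^sup>2) + p / 2 * ((norm b)\<^sup>2 - (norm b')\<^sup>2))" for x
    unfolding prox_objective_def e_def
    by (simp add: power2_norm_eq_inner inner_diff_left inner_diff_right inner_commute algebra_simps)
  have "(\<mu> + \<eta> + p) * (norm (xm - xm'))\<^sup>2 \<le> inner e (xm' - xm)"
    using prox_objective_arg_min[OF \<Omega> am S(2)] prox_objective_arg_min[OF \<Omega> am' S(1)]
      diff[of xm] diff[of xm']
    by (simp add: norm_minus_commute inner_diff_right)
  also have "\<dots> \<le> norm e * norm (xm - xm')"
    using norm_cauchy_schwarz[of e "xm' - xm"] by (simp add: norm_minus_commute)
  finally have "(\<mu> + \<eta> + p) * (norm (xm - xm'))\<^sup>2 \<le> norm e * norm (xm - xm')" .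
  then show ?thesis
    unfolding e_def[symmetric]
    by (cases "xm = xm'") (simp_all add: power2_eq_square)
qed

section \<open>The inner primal-dual loops\<close>

lemma mult_le_weighted_squares:
  fixes a b q :: real
  assumes "0 < q"
  shows "a * b \<le> a\<^sup>2 / (2 * q) + q / 2 * b\<^sup>2"
proof -
  have "0 \<le> (a - q * b)\<^sup>2" by simp
  then have "2 * q * (a * b) \<le> a\<^sup>2 + q\<^sup>2 * b\<^sup>2"
    by (simp add: power2_eq_square algebra_simps)
  then show ?thesis
    using assms by (simp add: field_simps power2_eq_square)
qed

lemma scaled_inner_le_weighted_squares:
  fixes A :: "'v::real_inner \<Rightarrow> 'w::real_inner"
  assumes A: "\<And>u. norm (A u) \<le> nA * norm u" and q: "0 < q" and \<alpha>: "0 \<le> \<alpha>"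
  shows "\<alpha> * inner (A d) e \<le> q / 2 * (norm e)\<^sup>2 + \<alpha>\<^sup>2 * nA\<^sup>2 / (2 * q) * (norm d)\<^sup>2"
proof -
  have "\<alpha> * inner (A d) e \<le> \<alpha> * (norm (A d) * norm e)"
    by (intro mult_left_mono norm_cauchy_schwarz \<alpha>)
  also have "\<dots> \<le> \<alpha> * ((nA * norm d) * norm e)"
    using A[of d] \<alpha> by (intro mult_left_mono mult_right_mono) auto
  also have "\<dots> = (\<alpha> * nA * norm d) * norm e"
    by simp
  also have "\<dots> \<le> (\<alpha> * nA * norm d)\<^sup>2 / (2 * q) + q / 2 * (norm e)\<^sup>2"
    by (rule mult_le_weighted_squares[OF q])
  finally show ?thesis
    by (simp add: power_mult_distrib)
qed

lemma dual_step_bound: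
  fixes A :: "'v::real_inner \<Rightarrow> 'w::real_inner"
  assumes A: "linear A" "\<And>u. norm (A u) \<le> nA * norm u" and q: "0 < q" and \<alpha>: "0 \<le> \<alpha>"
    and z': "z' = z0 + (1 / q) *\<^sub>R A (a + \<alpha> *\<^sub>R d)"
  shows "inner (A x') (z - z')
    \<le> q / 2 * (norm (z - z0))\<^sup>2 - q / 2 * (norm (z - z'))\<^sup>2 + inner (A (x' - a)) (z - z')
       - \<alpha> * inner (A d) (z - z0) + \<alpha>\<^sup>2 * nA\<^sup>2 / (2 * q) * (norm d)\<^sup>2"
proof -
  have "A (a + \<alpha> *\<^sub>R d) = q *\<^sub>R (z' - z0)"
    using z' q by simp
  then have Ax': "A x' = q *\<^sub>R (z' - z0) + A (x' - a) - \<alpha> *\<^sub>R A d"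
    using A(1) by (simp add: linear_add linear_diff linear_scale algebra_simps)
  have "inner (A x') (z - z') = q * inner (z' - z0) (z - z') + inner (A (x' - a)) (z - z')
      - \<alpha> * inner (A d) (z - z')"
    unfolding Ax' by (simp only: inner_add_left inner_diff_left inner_scaleR_left)
  moreover have "\<alpha> * inner (A d) (z - z') = \<alpha> * inner (A d) (z - z0) - \<alpha> * inner (A d) (z' - z0)"
    by (simp add: inner_diff_right right_diff_distrib)
  moreover have "q * inner (z' - z0) (z - z')
      = q / 2 * (norm (z - z0))\<^sup>2 - q / 2 * (norm (z - z'))\<^sup>2 - q / 2 * (norm (z' - z0))\<^sup>2"
  proof -
    have "z' - z0 + (z - z') = z - z0" by simp
    then have "q * inner (z' - z0) (z - z')
        = q * (((norm (z - z0))\<^sup>2 - (norm (z' - z0))\<^sup>2 - (norm (z - z'))\<^sup>2) / 2)"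
      using dot_norm[of "z' - z0" "z - z'"] by simp
    also have "\<dots> = q / 2 * (norm (z - z0))\<^sup>2 - q / 2 * (norm (z - z'))\<^sup>2 - q / 2 * (norm (z' - z0))\<^sup>2"
      by (simp add: field_simps)
    finally show ?thesis .
  qed
  moreover have "\<alpha> * inner (A d) (z' - z0) \<le> q / 2 * (norm (z' - z0))\<^sup>2 + \<alpha>\<^sup>2 * nA\<^sup>2 / (2 * q) * (norm d)\<^sup>2"
    by (rule scaled_inner_le_weighted_squares[OF A(2) q \<alpha>])
  ultimately show ?thesis
    by linarith
qed

lemma convex_on_weighted_mean:
  fixes g :: "'a::real_vector \<Rightarrow> real"
  assumes g: "convex_on UNIV g" and I: "finite I" "I \<noteq> {}" and w: "\<forall>i\<in>I. 0 < w i"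
  shows "g ((1 / (\<Sum>i\<in>I. w i)) *\<^sub>R (\<Sum>i\<in>I. w i *\<^sub>R y i))
    \<le> (1 / (\<Sum>i\<in>I. w i)) * (\<Sum>i\<in>I. w i * g (y i))"
proof -
  define W where "W = (\<Sum>i\<in>I. w i)"
  have W: "0 < W" unfolding W_def using I w by (intro sum_pos) auto
  have "g (\<Sum>i\<in>I. (w i / W) *\<^sub>R y i) \<le> (\<Sum>i\<in>I. (w i / W) * g (y i))"
    using I w W
    by (intro convex_on_sum[OF I g]) (auto simp: W_def sum_divide_distrib[symmetric] less_imp_le)
  then show ?thesis
    unfolding W_def[symmetric] by (simp add: scaleR_sum_right sum_distrib_left)
qed

text \<open>\<open>X k t\<close>, \<open>Z k t\<close> are \<open>x\<^sub>k\<^sup>t, z\<^sub>k\<^sup>t\<close> for one sample, \<open>V k\<close> is \<open>v\<^sub>k\<close>, and \<open>X k 0 = x\<^sub>k\<^sub>-\<^sub>1\<close> is also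
  the prox centre of round \<open>k\<close>.\<close>
locale pds_inner_loops =
  fixes A :: "'v::real_inner \<Rightarrow> 'w::real_inner" and At :: "'w \<Rightarrow> 'v" and nA :: real
    and \<Omega> :: "'v \<Rightarrow> real" and \<mu> :: real and S :: "'v set"
    and N :: nat and T :: "nat \<Rightarrow> nat" and \<beta> p :: "nat \<Rightarrow> real" and q \<eta> \<alpha> :: "nat \<Rightarrow> nat \<Rightarrow> real"
    and x0 :: 'v and X :: "nat \<Rightarrow> nat \<Rightarrow> 'v" and Z :: "nat \<Rightarrow> nat \<Rightarrow> 'w" and V :: "nat \<Rightarrow> 'v"
  assumes N_pos: "1 \<le> N" and A_linear: "linear A"
    and A_bound: "\<And>u. norm (A u) \<le> nA * norm u"
    and A_adjoint: "\<And>u z. inner (A u) z = inner u (At z)"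
    and \<Omega>_strongly_convex: "strongly_convex_on UNIV 1 \<Omega>"
    and \<mu>_nonneg: "0 \<le> \<mu>" and S_convex: "convex S"
    and T_pos: "\<forall>k\<in>{1..N}. 1 \<le> T k"
    and \<beta>_pos: "\<forall>k\<in>{1..N}. 0 < \<beta> k" and p_pos: "\<forall>k\<in>{1..N}. 0 < p k"
    and q_pos: "\<forall>k\<in>{1..N}. \<forall>t\<in>{1..T k}. 0 < q k t"
    and \<eta>_pos: "\<forall>k\<in>{1..N}. \<forall>t\<in>{1..T k}. 0 < \<eta> k t"
    and \<alpha>_nonneg: "\<forall>k\<in>{1..N}. \<forall>t\<in>{1..T k}. 0 \<le> \<alpha> k t"
    and across_rounds: "\<forall>k\<in>{2..N}.
        \<beta> k * real (T (k - 1)) * \<alpha> k 1 = \<beta> (k - 1) * real (T k)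
      \<and> \<alpha> k 1 * nA\<^sup>2 \<le> \<eta> (k - 1) (T (k - 1)) * q k 1
      \<and> \<beta> k * real (T (k - 1)) * q k 1 \<le> \<beta> (k - 1) * real (T k) * q (k - 1) (T (k - 1))
      \<and> \<beta> k * real (T (k - 1)) * (\<eta> k 1 + p k * real (T k))
          \<le> \<beta> (k - 1) * real (T k) * (\<mu> + \<eta> (k - 1) (T (k - 1)) + p (k - 1))"
    and within_rounds: "\<forall>k\<in>{1..N}. \<forall>t\<in>{2..T k}.
        \<alpha> k t = 1 \<and> nA\<^sup>2 \<le> \<eta> k (t - 1) * q k t \<and> q k t \<le> q k (t - 1)
      \<and> \<eta> k t \<le> \<mu> + \<eta> k (t - 1) + p k"
    and last_step: "nA\<^sup>2 \<le> \<eta> N (T N) * q N (T N)"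
    and X_init: "\<forall>k\<in>{1..N}. X k 0 = (if k = 1 then x0 else X (k - 1) (T (k - 1)))"
    and Z_init: "\<forall>k\<in>{1..N}. Z k 0 = (if k = 1 then 0 else Z (k - 1) (T (k - 1)))"
    and Z_step: "\<forall>k\<in>{1..N}. \<forall>t\<in>{1..T k}.
        Z k t = Z k (t - 1) + (1 / q k t) *\<^sub>R A (X k (t - 1) + \<alpha> k t *\<^sub>R
           (X k (t - 1) - (if t = 1 then (if k \<le> 1 then x0 else X (k - 1) (T (k - 1) - 1)) else X k (t - 2))))"
    and X_step: "\<forall>k\<in>{1..N}. \<forall>t\<in>{1..T k}.
        is_arg_min (prox_objective \<Omega> \<mu> (V k + At (Z k t)) (\<eta> k t) (X k (t - 1)) (p k) (X k 0))
          (\<lambda>x. x \<in> S) (X k t)"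
begin

definition "weight k = \<beta> k / real (T k)"

definition "X_before_prev k t =
  (if t = 1 then (if k \<le> 1 then x0 else X (k - 1) (T (k - 1) - 1)) else X k (t - 2))"

definition "step_gap x z k t = \<mu> * \<Omega> (X k t) - \<mu> * \<Omega> x + inner (V k) (X k t - x)
   + p k / 2 * (norm (X k t - X k 0))\<^sup>2 + inner (A (X k t)) z - inner (A x) (Z k t)"

definition "potential_before x z k t = weight k * (\<eta> k t / 2 * (norm (x - X k (t - 1)))\<^sup>2
   + (real (T k) - real t + 1) * p k / 2 * (norm (x - X k 0))\<^sup>2
   + q k t / 2 * (norm (z - Z k (t - 1)))\<^sup>2
   + (\<alpha> k t)\<^sup>2 * nA\<^sup>2 / (2 * q k t) * (norm (X k (t - 1) - X_before_prev k t))\<^sup>2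
   - \<alpha> k t * inner (A (X k (t - 1) - X_before_prev k t)) (z - Z k (t - 1)))"

definition "potential_after x z k t = weight k * ((\<mu> + p k + \<eta> k t) / 2 * (norm (x - X k t))\<^sup>2
   + (real (T k) - real t) * p k / 2 * (norm (x - X k 0))\<^sup>2
   + q k t / 2 * (norm (z - Z k t))\<^sup>2
   + \<eta> k t / 2 * (norm (X k t - X k (t - 1)))\<^sup>2
   - inner (A (X k t - X k (t - 1))) (z - Z k t))"

lemma weight_pos:
  assumes "k \<in> {1..N}"
  shows "0 < weight k"
proof -
  have "0 < \<beta> k" "1 \<le> T k" using \<beta>_pos T_pos assms by auto
  then show ?thesis by (simp add: weight_def)
qed

lemma step_gap_le_potential_drop:
  assumes k: "k \<in> {1..N}" and t: "t \<in> {1..T k}" and x: "x \<in> S"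
  shows "weight k * step_gap x z k t \<le> potential_before x z k t - potential_after x z k t"
proof -
  have q: "0 < q k t" and \<eta>: "0 < \<eta> k t" and p: "0 < p k" and \<alpha>: "0 \<le> \<alpha> k t"
    using q_pos \<eta>_pos p_pos \<alpha>_nonneg k t by auto
  define a where "a = X k (t - 1)"
  define b where "b = X k 0"
  define xt where "xt = X k t"
  define zt where "zt = Z k t"
  define zp where "zp = Z k (t - 1)"
  define d where "d = X k (t - 1) - X_before_prev k t"
  have "prox_objective \<Omega> \<mu> (V k + At zt) (\<eta> k t) a (p k) b xt
      + (\<mu> + \<eta> k t + p k) / 2 * (norm (x - xt))\<^sup>2
      \<le> prox_objective \<Omega> \<mu> (V k + At zt) (\<eta> k t) a (p k) b x"
    unfolding a_def b_def xt_def zt_def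
    using X_step k t \<eta> p x
    by (intro prox_objective_arg_min[OF \<Omega>_strongly_convex \<mu>_nonneg _ _ S_convex]) auto
  moreover have adj: "inner (V k + At zt) u = inner (V k) u + inner (A u) zt" for u
    by (simp add: inner_add_left A_adjoint inner_commute[of "At zt"])
  ultimately have primal: "step_gap x z k t \<le> \<eta> k t / 2 * (norm (x - a))\<^sup>2 + p k / 2 * (norm (x - b))\<^sup>2
      - \<eta> k t / 2 * (norm (xt - a))\<^sup>2 - (\<mu> + \<eta> k t + p k) / 2 * (norm (x - xt))\<^sup>2
      + inner (A xt) (z - zt)"
    unfolding step_gap_def prox_objective_def xt_def[symmetric] zt_def[symmetric] b_def[symmetric]
      norm_minus_commute[of a] norm_minus_commute[of b] inner_diff_right adj
    by linarith
  have "zt = zp + (1 / q k t) *\<^sub>R A (a + \<alpha> k t *\<^sub>R d)"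
    using Z_step k t unfolding zt_def zp_def a_def d_def X_before_prev_def by auto
  from primal dual_step_bound[OF A_linear A_bound q \<alpha> this, of xt z]
  have "step_gap x z k t \<le> \<eta> k t / 2 * (norm (x - a))\<^sup>2 + p k / 2 * (norm (x - b))\<^sup>2
      + q k t / 2 * (norm (z - zp))\<^sup>2 + (\<alpha> k t)\<^sup>2 * nA\<^sup>2 / (2 * q k t) * (norm d)\<^sup>2
      - \<alpha> k t * inner (A d) (z - zp)
      - ((\<mu> + p k + \<eta> k t) / 2 * (norm (x - xt))\<^sup>2 + q k t / 2 * (norm (z - zt))\<^sup>2
         + \<eta> k t / 2 * (norm (xt - a))\<^sup>2 - inner (A (xt - a)) (z - zt))"
    by (simp add: algebra_simps)
  from mult_left_mono[OF this less_imp_le[OF weight_pos[OF k]]]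
  show ?thesis
    unfolding potential_before_def potential_after_def a_def b_def xt_def zt_def zp_def d_def
    using q by (simp add: field_simps)
qed

lemma potential_before_next_le:
  assumes k: "k \<in> {1..N}" and t: "1 \<le> t" "t < T k"
  shows "potential_before x z k (Suc t) \<le> potential_after x z k t"
proof -
  have "Suc t \<in> {2..T k}" using t by auto
  with within_rounds k have "\<alpha> k (Suc t) = 1 \<and> nA\<^sup>2 \<le> \<eta> k (Suc t - 1) * q k (Suc t)
      \<and> q k (Suc t) \<le> q k (Suc t - 1) \<and> \<eta> k (Suc t) \<le> \<mu> + \<eta> k (Suc t - 1) + p k"
    by blast
  then have c: "\<alpha> k (Suc t) = 1" "nA\<^sup>2 \<le> \<eta> k t * q k (Suc t)" "q k (Suc t) \<le> q k t"
      "\<eta> k (Suc t) \<le> \<mu> + \<eta> k t + p k"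
    by auto
  have q: "0 < q k (Suc t)" using q_pos k t by auto
  define a where "a = (norm (x - X k t))\<^sup>2"
  define b where "b = (norm (z - Z k t))\<^sup>2"
  define d where "d = (norm (X k t - X k (t - 1)))\<^sup>2"
  have abd: "0 \<le> a" "0 \<le> b" "0 \<le> d" unfolding a_def b_def d_def by auto
  have "nA\<^sup>2 / q k (Suc t) \<le> \<eta> k t" using c(2) q by (simp add: divide_le_eq)
  then have "\<eta> k (Suc t) / 2 * a + q k (Suc t) / 2 * b + nA\<^sup>2 / (2 * q k (Suc t)) * d
      \<le> (\<mu> + p k + \<eta> k t) / 2 * a + q k t / 2 * b + \<eta> k t / 2 * d"
    using c(3,4) abd by (intro add_mono mult_right_mono) auto
  moreover have "X_before_prev k (Suc t) = X k (t - 1)"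
    unfolding X_before_prev_def using t by (simp add: numeral_2_eq_2)
  ultimately show ?thesis
    using weight_pos[OF k] c(1)
    unfolding potential_before_def potential_after_def a_def b_def d_def
    by (intro mult_left_mono) (auto simp: algebra_simps)
qed

lemma weights_across_rounds:
  assumes k: "k \<in> {2..N}"
  shows "weight k * \<alpha> k 1 = weight (k - 1)"
    and "weight k * (\<eta> k 1 + real (T k) * p k)
      \<le> weight (k - 1) * (\<mu> + p (k - 1) + \<eta> (k - 1) (T (k - 1)))"
    and "weight k * q k 1 \<le> weight (k - 1) * q (k - 1) (T (k - 1))"
    and "weight k * ((\<alpha> k 1)\<^sup>2 * nA\<^sup>2 / (2 * q k 1)) \<le> weight (k - 1) * (\<eta> (k - 1) (T (k - 1)) / 2)"
proof -
  have c: "\<beta> k * real (T (k - 1)) * \<alpha> k 1 = \<beta> (k - 1) * real (T k)"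
      "\<alpha> k 1 * nA\<^sup>2 \<le> \<eta> (k - 1) (T (k - 1)) * q k 1"
      "\<beta> k * real (T (k - 1)) * q k 1 \<le> \<beta> (k - 1) * real (T k) * q (k - 1) (T (k - 1))"
      "\<beta> k * real (T (k - 1)) * (\<eta> k 1 + p k * real (T k))
        \<le> \<beta> (k - 1) * real (T k) * (\<mu> + \<eta> (k - 1) (T (k - 1)) + p (k - 1))"
    using across_rounds k by auto
  have k': "k \<in> {1..N}" "k - 1 \<in> {1..N}" using k by auto
  then have T: "1 \<le> T k" "1 \<le> T (k - 1)" using T_pos by auto
  have w: "0 < weight (k - 1)" using weight_pos k' by auto
  have q: "0 < q k 1" using q_pos k' T by auto
  show \<alpha>: "weight k * \<alpha> k 1 = weight (k - 1)"
    using c(1) T unfolding weight_def by (simp add: field_simps)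
  show "weight k * (\<eta> k 1 + real (T k) * p k)
      \<le> weight (k - 1) * (\<mu> + p (k - 1) + \<eta> (k - 1) (T (k - 1)))"
    using c(4) T unfolding weight_def by (simp add: field_simps)
  show "weight k * q k 1 \<le> weight (k - 1) * q (k - 1) (T (k - 1))"
    using c(3) T unfolding weight_def by (simp add: field_simps)
  have "weight k * ((\<alpha> k 1)\<^sup>2 * nA\<^sup>2 / (2 * q k 1)) = weight (k - 1) * (\<alpha> k 1 * nA\<^sup>2 / q k 1) / 2"
    using \<alpha> by (simp add: power2_eq_square field_simps)
  also have "\<dots> \<le> weight (k - 1) * \<eta> (k - 1) (T (k - 1)) / 2"
    using c(2) q w by (simp add: divide_le_eq mult_left_mono)
  finally show "weight k * ((\<alpha> k 1)\<^sup>2 * nA\<^sup>2 / (2 * q k 1)) \<le> weight (k - 1) * (\<eta> (k - 1) (T (k - 1)) / 2)"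
    by simp
qed

lemma potential_before_first_le:
  assumes k: "k \<in> {2..N}"
  shows "potential_before x z k 1 \<le> potential_after x z (k - 1) (T (k - 1))"
proof -
  define j where "j = k - 1"
  have kj: "k = Suc j" "1 \<le> j" using k unfolding j_def by auto
  have w: "weight k * \<alpha> k 1 = weight j"
    "weight k * (\<eta> k 1 + real (T k) * p k) \<le> weight j * (\<mu> + p j + \<eta> j (T j))"
    "weight k * q k 1 \<le> weight j * q j (T j)"
    "weight k * ((\<alpha> k 1)\<^sup>2 * nA\<^sup>2 / (2 * q k 1)) \<le> weight j * (\<eta> j (T j) / 2)"
    using weights_across_rounds[OF k] unfolding j_def by auto
  have init: "X k 0 = X j (T j)" "Z k 0 = Z j (T j)" "X_before_prev k (Suc 0) = X j (T j - 1)"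
    using X_init Z_init k kj by (auto simp: X_before_prev_def)
  define a where "a = (norm (x - X j (T j)))\<^sup>2"
  define b where "b = (norm (z - Z j (T j)))\<^sup>2"
  define d where "d = (norm (X j (T j) - X j (T j - 1)))\<^sup>2"
  define I where "I = inner (A (X j (T j) - X j (T j - 1))) (z - Z j (T j))"
  have abd: "0 \<le> a" "0 \<le> b" "0 \<le> d" unfolding a_def b_def d_def by auto
  have "potential_before x z k 1 = weight k * (\<eta> k 1 + real (T k) * p k) / 2 * a + weight k * q k 1 / 2 * b
      + weight k * ((\<alpha> k 1)\<^sup>2 * nA\<^sup>2 / (2 * q k 1)) * d - (weight k * \<alpha> k 1) * I"
    unfolding potential_before_def a_def b_def d_def I_def by (simp add: init field_simps)
  also have "\<dots> \<le> weight j * (\<mu> + p j + \<eta> j (T j)) / 2 * a + weight j * q j (T j) / 2 * b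
      + weight j * (\<eta> j (T j) / 2) * d - weight j * I"
  proof -
    have "weight k * (\<eta> k 1 + real (T k) * p k) / 2 * a \<le> weight j * (\<mu> + p j + \<eta> j (T j)) / 2 * a"
      "weight k * q k 1 / 2 * b \<le> weight j * q j (T j) / 2 * b"
      "weight k * ((\<alpha> k 1)\<^sup>2 * nA\<^sup>2 / (2 * q k 1)) * d \<le> weight j * (\<eta> j (T j) / 2) * d"
      using w(2-4) abd by (intro mult_right_mono divide_right_mono; simp)+
    then show ?thesis
      unfolding w(1) by linarith
  qed
  also have "\<dots> = potential_after x z j (T j)"
    unfolding potential_after_def a_def b_def d_def I_def by (simp add: field_simps)
  finally show ?thesis unfolding j_def .
qed

lemma potential_before_initial:
  "potential_before x z 1 1 = \<beta> 1 / 2 * (\<eta> 1 1 / real (T 1) + p 1) * (norm (x - x0))\<^sup>2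
     + \<beta> 1 * q 1 1 / (2 * real (T 1)) * (norm z)\<^sup>2"
proof -
  have "1 \<le> T 1" "X 1 0 = x0" "Z 1 0 = 0" using T_pos X_init Z_init N_pos by auto
  then show ?thesis
    unfolding potential_before_def weight_def X_before_prev_def
    by (simp add: linear_0[OF A_linear] field_simps)
qed

lemma potential_after_final_nonneg: "0 \<le> potential_after x z N (T N)"
proof -
  have N: "N \<in> {1..N}" using N_pos by auto
  then have T: "1 \<le> T N" using T_pos by auto
  have q: "0 < q N (T N)" and \<eta>: "0 < \<eta> N (T N)" and p: "0 < p N"
    using q_pos \<eta>_pos p_pos N T by auto
  define d where "d = X N (T N) - X N (T N - 1)"
  define e where "e = z - Z N (T N)"
  have "inner (A d) e \<le> q N (T N) / 2 * (norm e)\<^sup>2 + nA\<^sup>2 / (2 * q N (T N)) * (norm d)\<^sup>2"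
    using scaled_inner_le_weighted_squares[OF A_bound q, of 1 d e] by simp
  moreover have "nA\<^sup>2 / (2 * q N (T N)) * (norm d)\<^sup>2 \<le> \<eta> N (T N) / 2 * (norm d)\<^sup>2"
    using last_step q by (intro mult_right_mono) (auto simp: field_simps)
  moreover have "0 \<le> (\<mu> + p N + \<eta> N (T N)) / 2 * (norm (x - X N (T N)))\<^sup>2"
    using \<mu>_nonneg p \<eta> by simp
  ultimately show ?thesis
    using weight_pos[OF N] unfolding potential_after_def d_def[symmetric] e_def[symmetric]
    by (intro mult_nonneg_nonneg) auto
qed

lemma round_telescope:
  assumes k: "k \<in> {1..N}" and x: "x \<in> S"
  shows "1 \<le> s \<Longrightarrow> s \<le> T k \<Longrightarrow>
    weight k * (\<Sum>t\<in>{1..s}. step_gap x z k t) \<le> potential_before x z k 1 - potential_after x z k s"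
proof (induction s)
  case 0
  then show ?case by simp
next
  case (Suc s)
  show ?case
  proof (cases "s = 0")
    case True
    then show ?thesis
      using step_gap_le_potential_drop[OF k _ x, of 1 z] Suc.prems by simp
  next
    case False
    then have "weight k * (\<Sum>t\<in>{1..s}. step_gap x z k t) \<le> potential_before x z k 1 - potential_after x z k s"
      using Suc by simp
    moreover have "weight k * step_gap x z k (Suc s) \<le> potential_before x z k (Suc s) - potential_after x z k (Suc s)"
      using Suc.prems by (intro step_gap_le_potential_drop[OF k _ x]) auto
    moreover have "potential_before x z k (Suc s) \<le> potential_after x z k s"
      using False Suc.prems by (intro potential_before_next_le[OF k]) auto
    ultimately show ?thesis
      by (simp add: distrib_left)
  qed
qed

lemma rounds_telescope:
  assumes x: "x \<in> S"
  shows "1 \<le> K \<Longrightarrow> K \<le> N \<Longrightarrow> (\<Sum>k\<in>{1..K}. weight k * (\<Sum>t\<in>{1..T k}. step_gap x z k t))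
    \<le> potential_before x z 1 1 - potential_after x z K (T K)"
proof (induction K)
  case 0
  then show ?case by simp
next
  case (Suc K)
  then have K: "Suc K \<in> {1..N}" by auto
  then have "weight (Suc K) * (\<Sum>t\<in>{1..T (Suc K)}. step_gap x z (Suc K) t)
      \<le> potential_before x z (Suc K) 1 - potential_after x z (Suc K) (T (Suc K))"
    using round_telescope[OF K x] T_pos by simp
  moreover have "potential_before x z (Suc K) 1 \<le> potential_after x z K (T K)" if "K \<noteq> 0"
    using potential_before_first_le[of "Suc K"] Suc.prems that by simp
  ultimately show ?case
    using Suc by (cases "K = 0") auto
qed

lemma weighted_step_gap_sum_le:
  assumes "x \<in> S"
  shows "(\<Sum>k\<in>{1..N}. weight k * (\<Sum>t\<in>{1..T k}. step_gap x z k t))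
    \<le> \<beta> 1 / 2 * (\<eta> 1 1 / real (T 1) + p 1) * (norm (x - x0))\<^sup>2
     + \<beta> 1 * q 1 1 / (2 * real (T 1)) * (norm z)\<^sup>2"
  using rounds_telescope[OF assms N_pos order.refl, of z] potential_after_final_nonneg[of x z]
    potential_before_initial[of x z]
  by linarith

lemma step_gap_sum_ge_mean:
  assumes k: "k \<in> {1..N}" and Ax: "A x = 0"
  defines "xm \<equiv> (1 / real (T k)) *\<^sub>R (\<Sum>t\<in>{1..T k}. X k t)"
  shows "real (T k) * (\<mu> * \<Omega> xm - \<mu> * \<Omega> x + inner (V k) (xm - x)
      + p k / 2 * (norm (xm - X k 0))\<^sup>2 + inner (A xm) z)
    \<le> (\<Sum>t\<in>{1..T k}. step_gap x z k t)"
proof -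
  define h where "h = prox_objective \<Omega> \<mu> 0 0 0 (p k) (X k 0)"
  define lin where "lin u = inner (V k) u + inner (A u) z" for u
  define c where "c = \<mu> * \<Omega> x + inner (V k) x"
  have T: "1 \<le> T k" using T_pos k by auto
  have "0 \<le> \<mu> + 0 + p k" using p_pos \<mu>_nonneg k by (simp add: add_nonneg_nonneg less_imp_le)
  then have "convex_on UNIV h"
    unfolding h_def
    by (intro strongly_convex_on_imp_convex_on[of _ "\<mu> + 0 + p k"] strongly_convex_on_prox_objective
        \<Omega>_strongly_convex \<mu>_nonneg) auto
  from convex_on_weighted_mean[OF this, of "{1..T k}" "\<lambda>_. 1" "X k"] T
  have "h xm \<le> (1 / real (T k)) * (\<Sum>t\<in>{1..T k}. h (X k t))"
    by (simp add: xm_def)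
  moreover have "lin xm = (1 / real (T k)) * (\<Sum>t\<in>{1..T k}. lin (X k t))"
    unfolding xm_def lin_def
    by (simp add: linear_scale[OF A_linear] linear_sum[OF A_linear] inner_sum_left inner_sum_right
        sum.distrib sum_divide_distrib add_divide_distrib)
  ultimately have "real (T k) * (h xm + lin xm - c)
      \<le> (\<Sum>t\<in>{1..T k}. h (X k t)) + (\<Sum>t\<in>{1..T k}. lin (X k t)) - real (T k) * c"
    using T by (simp add: field_simps)
  moreover have "step_gap x z k t = h (X k t) + lin (X k t) - c" for t
    unfolding step_gap_def h_def lin_def c_def prox_objective_def
    by (simp add: Ax inner_diff_right norm_minus_commute)
  moreover have "\<mu> * \<Omega> xm - \<mu> * \<Omega> x + inner (V k) (xm - x) + p k / 2 * (norm (xm - X k 0))\<^sup>2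
      + inner (A xm) z = h xm + lin xm - c"
    unfolding h_def lin_def c_def prox_objective_def
    by (simp add: inner_diff_right norm_minus_commute)
  ultimately show ?thesis
    by (simp add: sum.distrib sum_subtractf)
qed

end

section \<open>The accelerated outer loop\<close>

lemma inner_minus_bregman_le:
  fixes s u :: "'a::real_inner"
  assumes u: "(norm u)\<^sup>2 \<le> 2 * L * D" and D: "0 \<le> D" and c: "0 \<le> c" and p: "0 < p"
    and Lc: "2 * L * c \<le> p * e"
  shows "c * inner s u - e * D \<le> c * p / 4 * (norm s)\<^sup>2"
proof -
  have "c * inner s u \<le> c * (norm u * norm s)"
    using c norm_cauchy_schwarz[of s u] by (simp add: mult_left_mono mult.commute)
  also have "\<dots> \<le> c * ((norm u)\<^sup>2 / p + p / 4 * (norm s)\<^sup>2)"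
    using c mult_le_weighted_squares[of "p / 2" "norm u" "norm s"] p by (intro mult_left_mono) auto
  also have "\<dots> = c * (norm u)\<^sup>2 / p + c * p / 4 * (norm s)\<^sup>2"
    by (simp add: algebra_simps)
  also have "c * (norm u)\<^sup>2 / p \<le> e * D"
  proof -
    have "c * (norm u)\<^sup>2 \<le> (2 * L * c) * D"
      using mult_left_mono[OF u c] by (simp add: algebra_simps)
    also have "\<dots> \<le> (p * e) * D"
      using Lc D by (rule mult_right_mono)
    finally show ?thesis
      using p by (simp add: divide_le_eq algebra_simps)
  qed
  finally show ?thesis by simp
qed

text \<open>\<open>xo k\<close>, \<open>xh k\<close>, \<open>xl k\<close> are \<open>x\<^sub>k\<close>, \<open>x\<^sup>^\<^sub>k\<close> and \<open>x\<^sub>_\<^sub>k\<close> for one sample.\<close>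
locale accelerated_outer_loop =
  fixes F :: "'v::real_inner \<Rightarrow> real" and G :: "'v \<Rightarrow> 'v" and L :: real
    and N :: nat and \<beta> p lam \<tau> :: "nat \<Rightarrow> real"
    and x0 :: 'v and xo xh xl :: "nat \<Rightarrow> 'v"
  assumes F_convex: "convex_on UNIV F"
    and F_gradient: "\<And>u. (F has_derivative (\<lambda>h. inner (G u) h)) (at u)"
    and G_lipschitz: "\<And>u w. norm (G u - G w) \<le> L * norm (u - w)"
    and L_nonneg: "0 \<le> L" and N_pos: "1 \<le> N"
    and \<beta>_pos: "\<forall>k\<in>{1..N}. 0 < \<beta> k" and p_pos: "\<forall>k\<in>{1..N}. 0 < p k"
    and lam_nonneg: "\<forall>k\<in>{1..N}. 0 \<le> lam k" and \<tau>_nonneg: "\<forall>k\<in>{1..N}. 0 \<le> \<tau> k"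
    and momentum: "\<forall>k\<in>{2..N}. \<beta> k * \<tau> k \<le> \<beta> (k - 1) * (\<tau> (k - 1) + 1)
      \<and> \<beta> (k - 1) = \<beta> k * lam k \<and> 2 * L * lam k \<le> p (k - 1) * \<tau> k"
    and \<tau>_first: "\<tau> 1 = 0" and p_last: "2 * L \<le> p N * (\<tau> N + 1)"
    and xo_0: "xo 0 = x0" and xh_0: "xh 0 = x0"
    and xl_step: "\<forall>k\<in>{1..N}. xl k = (1 / (1 + \<tau> k)) *\<^sub>R
        (xo (k - 1) + lam k *\<^sub>R (xh (k - 1) - xo (k - 2)) + \<tau> k *\<^sub>R xl (k - 1))"
begin

definition "x_tilde k = xo (k - 1) + lam k *\<^sub>R (xh (k - 1) - xo (k - 2))"

definition "disp k = xh k - xo (k - 1)"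

definition "linearization_error xb k =
  F xb - F (xl k) - inner (G (xl k)) (xh k - xl k) + inner (G xb) (xh k - xb)"

definition "residual xb k =
  \<beta> k * (1 + \<tau> k) * bregman_divergence F G (xl k) xb - \<beta> k * inner (disp k) (G xb - G (xl k))"

lemma bregman_nonneg: "0 \<le> bregman_divergence F G u w"
  by (rule bregman_divergence_nonneg[OF F_convex F_gradient])

lemma gradient_diff_sq_le_bregman: "(norm (G u - G w))\<^sup>2 \<le> 2 * L * bregman_divergence F G u w"
  by (rule gradient_diff_sq_le_bregman_divergence[OF F_convex F_gradient G_lipschitz L_nonneg])

text \<open>\<open>x\<^sub>_\<^sub>k\<close> is a convex combination of \<open>x~\<^sub>k\<close> and \<open>x\<^sub>_\<^sub>k\<^sub>-\<^sub>1\<close>, which splits the linearization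
  error into Bregman divergences at consecutive gradient points.\<close>
lemma linearization_error_eq:
  assumes k: "k \<in> {1..N}"
  shows "linearization_error xb k = \<tau> k * bregman_divergence F G (xl (k - 1)) xb
    - (1 + \<tau> k) * bregman_divergence F G (xl k) xb
    - \<tau> k * bregman_divergence F G (xl (k - 1)) (xl k) + inner (xh k - x_tilde k) (G xb - G (xl k))"
proof -
  have xl: "xl k = (1 / (1 + \<tau> k)) *\<^sub>R (x_tilde k + \<tau> k *\<^sub>R xl (k - 1))"
    using bspec[OF xl_step k] unfolding x_tilde_def .
  have "1 + \<tau> k \<noteq> 0" using \<tau>_nonneg k by (smt (verit))
  then have "(1 + \<tau> k) *\<^sub>R xl k = x_tilde k + \<tau> k *\<^sub>R xl (k - 1)"
    by (subst xl) simp
  then have xt: "x_tilde k = (1 + \<tau> k) *\<^sub>R xl k - \<tau> k *\<^sub>R xl (k - 1)"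
    by (simp add: eq_diff_eq)
  show ?thesis
    unfolding linearization_error_def bregman_divergence_def xt
    by (simp add: inner_diff_left inner_diff_right inner_add_left inner_add_right inner_commute algebra_simps)
qed

lemma linearization_error_first: "\<beta> 1 * linearization_error xb 1 = - residual xb 1"
proof -
  have "xl 1 = xo 0"
    using bspec[OF xl_step, of 1] N_pos \<tau>_first xo_0 xh_0 by simp
  then show ?thesis
    using \<tau>_first unfolding linearization_error_def residual_def disp_def bregman_divergence_def
    by (simp add: inner_diff_left inner_diff_right inner_commute algebra_simps)
qed

lemma linearization_error_step:
  assumes K: "K \<in> {1..<N}"
  shows "\<beta> (Suc K) * linearization_error xb (Suc K)
    \<le> residual xb K - residual xb (Suc K) + \<beta> K * (p K / 4 * (norm (disp K))\<^sup>2)"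
proof -
  have K': "Suc K \<in> {2..N}" "Suc K \<in> {1..N}" "K \<in> {1..N}" using K by auto
  from bspec[OF momentum K'(1)]
  have c: "\<beta> (Suc K) * \<tau> (Suc K) \<le> \<beta> K * (\<tau> K + 1)" "\<beta> K = \<beta> (Suc K) * lam (Suc K)"
      "2 * L * lam (Suc K) \<le> p K * \<tau> (Suc K)"
    unfolding diff_Suc_1 by blast+
  have pos: "0 < \<beta> (Suc K)" "0 < p K" "0 \<le> lam (Suc K)"
    using \<beta>_pos p_pos lam_nonneg K' by auto
  define D where "D = bregman_divergence F G (xl K) (xl (Suc K))"
  have xdiff: "xh (Suc K) - x_tilde (Suc K) = disp (Suc K) - lam (Suc K) *\<^sub>R disp K"
    unfolding x_tilde_def disp_def by (simp add: algebra_simps numeral_2_eq_2)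
  have "residual xb (Suc K) + \<beta> (Suc K) * linearization_error xb (Suc K) - residual xb K
      = (\<beta> (Suc K) * \<tau> (Suc K) - \<beta> K * (1 + \<tau> K)) * bregman_divergence F G (xl K) xb
        + \<beta> (Suc K) * (lam (Suc K) * inner (disp K) (G (xl (Suc K)) - G (xl K)) - \<tau> (Suc K) * D)"
    unfolding linearization_error_eq[OF K'(2)] residual_def D_def xdiff
    using c(2) by (simp add: inner_diff_left inner_diff_right algebra_simps)
  moreover have "(\<beta> (Suc K) * \<tau> (Suc K) - \<beta> K * (1 + \<tau> K)) * bregman_divergence F G (xl K) xb \<le> 0"
    using c(1) bregman_nonneg by (intro mult_nonpos_nonneg) (auto simp: algebra_simps)
  moreover have "lam (Suc K) * inner (disp K) (G (xl (Suc K)) - G (xl K)) - \<tau> (Suc K) * D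
      \<le> lam (Suc K) * p K / 4 * (norm (disp K))\<^sup>2"
    using gradient_diff_sq_le_bregman[of "xl K" "xl (Suc K)"] bregman_nonneg pos c(3)
    by (intro inner_minus_bregman_le) (auto simp: D_def norm_minus_commute)
  then have "\<beta> (Suc K) * (lam (Suc K) * inner (disp K) (G (xl (Suc K)) - G (xl K)) - \<tau> (Suc K) * D)
      \<le> \<beta> K * (p K / 4 * (norm (disp K))\<^sup>2)"
    using mult_left_mono[of _ _ "\<beta> (Suc K)"] pos c(2) by (fastforce simp: algebra_simps)
  ultimately show ?thesis
    by linarith
qed

lemma linearization_error_partial_sum:
  "1 \<le> K \<Longrightarrow> K \<le> N \<Longrightarrow> (\<Sum>k\<in>{1..K}. \<beta> k * linearization_error xb k)
     \<le> (\<Sum>k\<in>{1..<K}. \<beta> k * (p k / 4 * (norm (disp k))\<^sup>2)) - residual xb K"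
proof (induction K)
  case 0
  then show ?case by simp
next
  case (Suc K)
  show ?case
  proof (cases "K = 0")
    case True
    then show ?thesis using linearization_error_first by simp
  next
    case False
    then have "(\<Sum>k\<in>{1..K}. \<beta> k * linearization_error xb k)
        \<le> (\<Sum>k\<in>{1..<K}. \<beta> k * (p k / 4 * (norm (disp k))\<^sup>2)) - residual xb K"
      using Suc by simp
    moreover have "\<beta> (Suc K) * linearization_error xb (Suc K)
        \<le> residual xb K - residual xb (Suc K) + \<beta> K * (p K / 4 * (norm (disp K))\<^sup>2)"
      using Suc.prems False by (intro linearization_error_step) auto
    ultimately show ?thesis
      using False by simp
  qed
qed

lemma linearization_error_sum:
  "(\<Sum>k\<in>{1..N}. \<beta> k * linearization_error xb k) \<le> (\<Sum>k\<in>{1..N}. \<beta> k * (p k / 4 * (norm (disp k))\<^sup>2))"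
proof -
  have N: "N \<in> {1..N}" using N_pos by auto
  then have pos: "0 < \<beta> N" "0 < p N" "0 \<le> \<tau> N" using \<beta>_pos p_pos \<tau>_nonneg by auto
  have "1 * inner (disp N) (G xb - G (xl N)) - (1 + \<tau> N) * bregman_divergence F G (xl N) xb
      \<le> 1 * p N / 4 * (norm (disp N))\<^sup>2"
  proof (rule inner_minus_bregman_le)
    show "(norm (G xb - G (xl N)))\<^sup>2 \<le> 2 * L * bregman_divergence F G (xl N) xb"
      using gradient_diff_sq_le_bregman[of "xl N" xb] by (simp add: norm_minus_commute)
    show "2 * L * 1 \<le> p N * (1 + \<tau> N)"
      using p_last by (simp add: add.commute)
  qed (use bregman_nonneg pos in auto)
  from mult_left_mono[OF this less_imp_le[OF pos(1)]]
  have "- residual xb N \<le> \<beta> N * (p N / 4 * (norm (disp N))\<^sup>2)"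
    by (simp add: residual_def algebra_simps)
  moreover have "(\<Sum>k\<in>{1..N}. \<beta> k * (p k / 4 * (norm (disp k))\<^sup>2))
      = (\<Sum>k\<in>{1..<N}. \<beta> k * (p k / 4 * (norm (disp k))\<^sup>2)) + \<beta> N * (p N / 4 * (norm (disp N))\<^sup>2)"
    using N_pos by (cases N) (auto simp: atLeastLessThanSuc_atLeastAtMost)
  ultimately show ?thesis
    using linearization_error_partial_sum[OF N_pos order.refl, of xb] by linarith
qed

lemma weighted_mean_gap_le:
  assumes xb: "xb = (1 / (\<Sum>k\<in>{1..N}. \<beta> k)) *\<^sub>R (\<Sum>k\<in>{1..N}. \<beta> k *\<^sub>R xh k)"
  shows "(\<Sum>k\<in>{1..N}. \<beta> k) * (F xb - F x)
    \<le> (\<Sum>k\<in>{1..N}. \<beta> k * (inner (G (xl k)) (xh k - x) + p k / 4 * (norm (xh k - xo (k - 1)))\<^sup>2))"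
proof -
  have B: "0 < (\<Sum>k\<in>{1..N}. \<beta> k)" using \<beta>_pos N_pos by (intro sum_pos) auto
  have "\<beta> k * (F xb - F x) \<le> \<beta> k * linearization_error xb k + \<beta> k * inner (G (xl k)) (xh k - x)
      - \<beta> k * inner (G xb) (xh k - xb)" if "k \<in> {1..N}" for k
  proof -
    have "F xb - F x \<le> linearization_error xb k + inner (G (xl k)) (xh k - x) - inner (G xb) (xh k - xb)"
      using bregman_nonneg[of x "xl k"]
      by (simp add: linearization_error_def bregman_divergence_def inner_diff_right algebra_simps)
    moreover have "0 \<le> \<beta> k" using bspec[OF \<beta>_pos that] by simp
    ultimately show ?thesis
      by (metis mult_left_mono right_diff_distrib distrib_left)
  qed
  then have "(\<Sum>k\<in>{1..N}. \<beta> k) * (F xb - F x) \<le> (\<Sum>k\<in>{1..N}. \<beta> k * linearization_error xb k)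
      + (\<Sum>k\<in>{1..N}. \<beta> k * inner (G (xl k)) (xh k - x)) - (\<Sum>k\<in>{1..N}. \<beta> k * inner (G xb) (xh k - xb))"
    unfolding sum_distrib_right sum.distrib[symmetric] sum_subtractf[symmetric] by (rule sum_mono)
  moreover have "(\<Sum>k\<in>{1..N}. \<beta> k * inner (G xb) (xh k - xb)) = 0"
  proof -
    have "(\<Sum>k\<in>{1..N}. \<beta> k *\<^sub>R (xh k - xb)) = (\<Sum>k\<in>{1..N}. \<beta> k *\<^sub>R xh k) - (\<Sum>k\<in>{1..N}. \<beta> k) *\<^sub>R xb"
      by (simp add: scaleR_diff_right sum_subtractf scaleR_sum_left)
    also have "\<dots> = 0" using B by (simp add: xb)
    finally have "inner (G xb) (\<Sum>k\<in>{1..N}. \<beta> k *\<^sub>R (xh k - xb)) = 0"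
      by simp
    then show ?thesis
      by (simp add: inner_sum_right)
  qed
  ultimately show ?thesis
    using linearization_error_sum[of xb]
    by (simp add: disp_def sum.distrib distrib_left)
qed

end

section \<open>Square-integrable random vectors\<close>

definition L2_measurable :: "'a measure \<Rightarrow> 'a measure \<Rightarrow> ('a \<Rightarrow> 'b::euclidean_space) \<Rightarrow> bool"
  where "L2_measurable M G w \<longleftrightarrow> w \<in> borel_measurable G \<and> integrable M (\<lambda>\<omega>. (norm (w \<omega>))\<^sup>2)"

lemma L2_measurable_borel_measurable:
  "subalgebra M G \<Longrightarrow> L2_measurable M G w \<Longrightarrow> w \<in> borel_measurable M"
  unfolding L2_measurable_def using measurable_from_subalg by blast

lemma L2_measurable_subalgebra:
  "subalgebra G' G \<Longrightarrow> L2_measurable M G w \<Longrightarrow> L2_measurable M G' w"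
  unfolding L2_measurable_def using measurable_from_subalg by blast

lemma L2_measurable_const:
  "prob_space M \<Longrightarrow> subalgebra M G \<Longrightarrow> L2_measurable M G (\<lambda>_. c)"
  unfolding L2_measurable_def using prob_space.finite_measure finite_measure.integrable_const by auto

lemma L2_measurable_cong:
  assumes G: "subalgebra M G" and w: "L2_measurable M G w"
    and eq: "\<And>\<omega>. \<omega> \<in> space M \<Longrightarrow> w \<omega> = w' \<omega>"
  shows "L2_measurable M G w'"
proof -
  have sp: "space G = space M" using G by (simp add: subalgebra_def)
  have "w' \<in> borel_measurable G \<longleftrightarrow> w \<in> borel_measurable G"
    by (rule measurable_cong) (simp add: sp eq)
  moreover have "integrable M (\<lambda>\<omega>. (norm (w' \<omega>))\<^sup>2) \<longleftrightarrow> integrable M (\<lambda>\<omega>. (norm (w \<omega>))\<^sup>2)"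
    by (rule Bochner_Integration.integrable_cong[OF refl]) (simp add: eq)
  ultimately show ?thesis
    using w by (simp add: L2_measurable_def)
qed

lemma L2_measurable_add:
  assumes G: "subalgebra M G" and a: "L2_measurable M G a" and b: "L2_measurable M G b"
  shows "L2_measurable M G (\<lambda>\<omega>. a \<omega> + b \<omega>)"
proof -
  have [measurable]: "a \<in> borel_measurable M" "b \<in> borel_measurable M"
    using G a b by (blast intro: L2_measurable_borel_measurable)+
  have "integrable M (\<lambda>\<omega>. (norm (a \<omega> + b \<omega>))\<^sup>2)"
  proof (rule Bochner_Integration.integrable_bound)
    show "integrable M (\<lambda>\<omega>. 2 * (norm (a \<omega>))\<^sup>2 + 2 * (norm (b \<omega>))\<^sup>2)"
      using a b by (auto simp: L2_measurable_def)
    have "(norm (a \<omega> + b \<omega>))\<^sup>2 \<le> 2 * (norm (a \<omega>))\<^sup>2 + 2 * (norm (b \<omega>))\<^sup>2" for \<omega>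
      using power_mono[OF norm_triangle_ineq[of "a \<omega>" "b \<omega>"], of 2]
        sum_squares_bound[of "norm (a \<omega>)" "norm (b \<omega>)"]
      by (simp add: power2_eq_square algebra_simps)
    then show "AE \<omega> in M. norm ((norm (a \<omega> + b \<omega>))\<^sup>2) \<le> norm (2 * (norm (a \<omega>))\<^sup>2 + 2 * (norm (b \<omega>))\<^sup>2)"
      by simp
  qed measurable
  then show ?thesis
    using a b by (auto simp: L2_measurable_def)
qed

lemma L2_measurable_compose:
  fixes h :: "'b::euclidean_space \<Rightarrow> 'c::euclidean_space"
  assumes P: "prob_space M" and G: "subalgebra M G" and a: "L2_measurable M G a"
    and h: "continuous_on UNIV h" and growth: "\<And>u. norm (h u) \<le> C0 + C1 * norm u" and C1: "0 \<le> C1"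
  shows "L2_measurable M G (\<lambda>\<omega>. h (a \<omega>))"
proof -
  interpret prob_space M by (rule P)
  have [measurable]: "a \<in> borel_measurable M" "h \<in> borel_measurable borel"
    using G a h by (blast intro: L2_measurable_borel_measurable borel_measurable_continuous_onI)+
  have "integrable M (\<lambda>\<omega>. (norm (h (a \<omega>)))\<^sup>2)"
  proof (rule Bochner_Integration.integrable_bound)
    show "integrable M (\<lambda>\<omega>. 2 * C0\<^sup>2 + 2 * C1\<^sup>2 * (norm (a \<omega>))\<^sup>2)"
      using a by (auto simp: L2_measurable_def)
    have "(norm (h (a \<omega>)))\<^sup>2 \<le> 2 * C0\<^sup>2 + 2 * C1\<^sup>2 * (norm (a \<omega>))\<^sup>2" for \<omega>
    proof -
      have "0 \<le> C0 + C1 * norm (a \<omega>)" using growth[of "a \<omega>"] norm_ge_zero order_trans by blast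
      then have "(norm (h (a \<omega>)))\<^sup>2 \<le> (C0 + C1 * norm (a \<omega>))\<^sup>2"
        using growth[of "a \<omega>"] by (simp add: power_mono)
      also have "\<dots> \<le> 2 * C0\<^sup>2 + 2 * C1\<^sup>2 * (norm (a \<omega>))\<^sup>2"
        using sum_squares_bound[of C0 "C1 * norm (a \<omega>)"]
        by (simp add: power2_eq_square algebra_simps)
      finally show ?thesis .
    qed
    then show "AE \<omega> in M. norm ((norm (h (a \<omega>)))\<^sup>2) \<le> norm (2 * C0\<^sup>2 + 2 * C1\<^sup>2 * (norm (a \<omega>))\<^sup>2)"
      by (simp add: order_trans[OF _ abs_ge_self])
  qed measurable
  moreover have "(\<lambda>\<omega>. h (a \<omega>)) \<in> borel_measurable G"
    using a h by (simp add: L2_measurable_def borel_measurable_continuous_on)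
  ultimately show ?thesis
    by (simp add: L2_measurable_def)
qed

lemma L2_measurable_bounded_linear:
  "prob_space M \<Longrightarrow> subalgebra M G \<Longrightarrow> L2_measurable M G a \<Longrightarrow> bounded_linear h
    \<Longrightarrow> L2_measurable M G (\<lambda>\<omega>. h (a \<omega>))"
  by (rule L2_measurable_compose[of _ _ _ _ 0 "onorm h"])
    (auto intro: linear_continuous_on onorm onorm_pos_le)

lemma L2_measurable_scaleR:
  "prob_space M \<Longrightarrow> subalgebra M G \<Longrightarrow> L2_measurable M G a \<Longrightarrow> L2_measurable M G (\<lambda>\<omega>. c *\<^sub>R a \<omega>)"
  by (rule L2_measurable_bounded_linear) (auto intro: bounded_linear_scaleR_right)

lemma L2_measurable_diff:
  assumes "prob_space M" "subalgebra M G" "L2_measurable M G a" "L2_measurable M G b"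
  shows "L2_measurable M G (\<lambda>\<omega>. a \<omega> - b \<omega>)"
  using L2_measurable_add[OF assms(2,3) L2_measurable_scaleR[OF assms(1,2,4), of "-1"]] by simp

lemma L2_measurable_sum:
  assumes "prob_space M" "subalgebra M G" "finite I" "\<And>i. i \<in> I \<Longrightarrow> L2_measurable M G (w i)"
  shows "L2_measurable M G (\<lambda>\<omega>. \<Sum>i\<in>I. w i \<omega>)"
  using assms(3,4)
proof (induction I rule: finite_induct)
  case empty
  then show ?case using L2_measurable_const[OF assms(1,2)] by simp
next
  case (insert i I)
  then show ?case by (simp add: L2_measurable_add[OF assms(2)])
qed

lemma sum3_sq_le: "((a::real) + b + c)\<^sup>2 \<le> 3 * a\<^sup>2 + 3 * b\<^sup>2 + 3 * c\<^sup>2"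
proof -
  have "(a + b + c)\<^sup>2 + (a - b)\<^sup>2 + (b - c)\<^sup>2 + (a - c)\<^sup>2 = 3 * a\<^sup>2 + 3 * b\<^sup>2 + 3 * c\<^sup>2"
    by (simp add: power2_eq_square algebra_simps)
  moreover have "0 \<le> (a - b)\<^sup>2" "0 \<le> (b - c)\<^sup>2" "0 \<le> (a - c)\<^sup>2" by simp_all
  ultimately show ?thesis by linarith
qed

text \<open>A map dominated in the Lipschitz sense by a measurable one factors through it continuously.\<close>
lemma borel_measurable_lipschitz_dominated:
  fixes x :: "'a \<Rightarrow> 'b::metric_space" and e :: "'a \<Rightarrow> 'c::metric_space"
  assumes e: "e \<in> borel_measurable G" and m: "0 < m"
    and dom: "\<And>\<omega> \<omega>'. \<omega> \<in> space G \<Longrightarrow> \<omega>' \<in> space G \<Longrightarrow> m * dist (x \<omega>) (x \<omega>') \<le> dist (e \<omega>) (e \<omega>')"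
  shows "x \<in> borel_measurable G"
proof -
  define P where "P u = x (SOME \<omega>. \<omega> \<in> space G \<and> e \<omega> = u)" for u
  have Pe: "P (e \<omega>) = x \<omega>" if \<omega>: "\<omega> \<in> space G" for \<omega>
  proof -
    define \<omega>' where "\<omega>' = (SOME \<omega>'. \<omega>' \<in> space G \<and> e \<omega>' = e \<omega>)"
    have "\<omega>' \<in> space G \<and> e \<omega>' = e \<omega>"
      unfolding \<omega>'_def by (rule someI[where x = \<omega>]) (simp add: \<omega>)
    then have "m * dist (x \<omega>') (x \<omega>) \<le> 0" using dom[of \<omega>' \<omega>] \<omega> by simp
    then show ?thesis using m by (simp add: P_def \<omega>'_def[symmetric] mult_le_0_iff)
  qed
  have "(1 / m)-lipschitz_on (e ` space G) P"
  proof (rule lipschitz_onI)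
    fix u u' assume "u \<in> e ` space G" "u' \<in> e ` space G"
    then obtain \<omega> \<omega>' where "\<omega> \<in> space G" "\<omega>' \<in> space G" "u = e \<omega>" "u' = e \<omega>'" by blast
    then show "dist (P u) (P u') \<le> 1 / m * dist u u'"
      using dom[of \<omega> \<omega>'] m by (simp add: Pe field_simps)
  qed (use m in simp)
  then have "P \<in> borel_measurable (restrict_space borel (e ` space G))"
    by (intro borel_measurable_continuous_on_restrict lipschitz_on_continuous_on)
  moreover have "e \<in> measurable G (restrict_space borel (e ` space G))"
    using e by (intro measurable_restrict_space2) auto
  ultimately have "(\<lambda>\<omega>. P (e \<omega>)) \<in> borel_measurable G"
    by (rule measurable_compose[rotated])
  then show ?thesis
    by (rule measurable_cong[THEN iffD1, rotated]) (simp add: Pe)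
qed

lemma L2_measurable_lipschitz_dominated:
  fixes x :: "'a \<Rightarrow> 'b::euclidean_space" and e :: "'a \<Rightarrow> 'c::euclidean_space"
  assumes P: "prob_space M" and G: "subalgebra M G" and e: "L2_measurable M G e" and m: "0 < m"
    and dom: "\<And>\<omega> \<omega>'. \<omega> \<in> space M \<Longrightarrow> \<omega>' \<in> space M \<Longrightarrow> m * norm (x \<omega> - x \<omega>') \<le> norm (e \<omega> - e \<omega>')"
  shows "L2_measurable M G x"
proof -
  interpret prob_space M by (rule P)
  have sp: "space G = space M" using G by (simp add: subalgebra_def)
  have xG: "x \<in> borel_measurable G"
  proof (rule borel_measurable_lipschitz_dominated[OF _ m])
    show "e \<in> borel_measurable G" using e by (simp add: L2_measurable_def)
    fix \<omega> \<omega>' assume "\<omega> \<in> space G" "\<omega>' \<in> space G"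
    then show "m * dist (x \<omega>) (x \<omega>') \<le> dist (e \<omega>) (e \<omega>')"
      using dom[of \<omega> \<omega>'] sp by (simp add: dist_norm)
  qed
  then have [measurable]: "x \<in> borel_measurable M" using G measurable_from_subalg by blast
  obtain \<omega>0 where \<omega>0: "\<omega>0 \<in> space M" using not_empty by blast
  define C where "C = 3 * (norm (x \<omega>0))\<^sup>2 + 3 * (norm (e \<omega>0) / m)\<^sup>2"
  have "integrable M (\<lambda>\<omega>. (norm (x \<omega>))\<^sup>2)"
  proof (rule Bochner_Integration.integrable_bound)
    show "integrable M (\<lambda>\<omega>. C + 3 / m\<^sup>2 * (norm (e \<omega>))\<^sup>2)"
      using e by (auto simp: L2_measurable_def)
    have "(norm (x \<omega>))\<^sup>2 \<le> C + 3 / m\<^sup>2 * (norm (e \<omega>))\<^sup>2" if \<omega>: "\<omega> \<in> space M" for \<omega>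
    proof -
      have "m * norm (x \<omega> - x \<omega>0) \<le> norm (e \<omega>) + norm (e \<omega>0)"
        using dom[OF \<omega> \<omega>0] norm_triangle_ineq4[of "e \<omega>" "e \<omega>0"] by linarith
      then have "norm (x \<omega> - x \<omega>0) \<le> norm (e \<omega>) / m + norm (e \<omega>0) / m"
        using m by (simp add: pos_le_divide_eq add_divide_distrib[symmetric] mult.commute)
      then have "norm (x \<omega>) \<le> norm (x \<omega>0) + norm (e \<omega>) / m + norm (e \<omega>0) / m"
        using norm_triangle_sub[of "x \<omega>" "x \<omega>0"] by linarith
      then have "(norm (x \<omega>))\<^sup>2 \<le> (norm (x \<omega>0) + norm (e \<omega>) / m + norm (e \<omega>0) / m)\<^sup>2"
        by (simp add: power_mono)
      also have "\<dots> \<le> 3 * (norm (x \<omega>0))\<^sup>2 + 3 * (norm (e \<omega>) / m)\<^sup>2 + 3 * (norm (e \<omega>0) / m)\<^sup>2"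
        by (rule sum3_sq_le)
      also have "\<dots> = C + 3 / m\<^sup>2 * (norm (e \<omega>))\<^sup>2"
        by (simp add: C_def power_divide)
      finally show ?thesis .
    qed
    then show "AE \<omega> in M. norm ((norm (x \<omega>))\<^sup>2) \<le> norm (C + 3 / m\<^sup>2 * (norm (e \<omega>))\<^sup>2)"
      by (intro AE_I2) (simp add: order_trans[OF _ abs_ge_self])
  qed measurable
  with xG show ?thesis
    by (simp add: L2_measurable_def)
qed

section \<open>Conditional expectations\<close>

lemma integrable_mult_of_L2_bounds:
  fixes f g :: "'a \<Rightarrow> real" and U V :: "'a \<Rightarrow> 'b::real_normed_vector"
  assumes [measurable]: "f \<in> borel_measurable M" "g \<in> borel_measurable M"
    and "integrable M (\<lambda>\<omega>. (norm (U \<omega>))\<^sup>2)" "integrable M (\<lambda>\<omega>. (norm (V \<omega>))\<^sup>2)"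
    and f: "\<And>\<omega>. \<bar>f \<omega>\<bar> \<le> norm (U \<omega>)" and g: "\<And>\<omega>. \<bar>g \<omega>\<bar> \<le> norm (V \<omega>)"
  shows "integrable M (\<lambda>\<omega>. f \<omega> * g \<omega>)"
proof (rule Bochner_Integration.integrable_bound)
  show "integrable M (\<lambda>\<omega>. (norm (U \<omega>))\<^sup>2 + (norm (V \<omega>))\<^sup>2)"
    using assms(3,4) by auto
  have "\<bar>f \<omega> * g \<omega>\<bar> \<le> (norm (U \<omega>))\<^sup>2 + (norm (V \<omega>))\<^sup>2" for \<omega>
  proof -
    have "\<bar>f \<omega> * g \<omega>\<bar> \<le> norm (U \<omega>) * norm (V \<omega>)"
      unfolding abs_mult by (intro mult_mono f g) auto
    also have "\<dots> \<le> (norm (U \<omega>))\<^sup>2 + (norm (V \<omega>))\<^sup>2"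
    proof -
      have "2 * (norm (U \<omega>) * norm (V \<omega>)) \<le> (norm (U \<omega>))\<^sup>2 + (norm (V \<omega>))\<^sup>2"
        using sum_squares_bound[of "norm (U \<omega>)" "norm (V \<omega>)"] by (simp add: power2_eq_square)
      moreover have "0 \<le> norm (U \<omega>) * norm (V \<omega>)" by simp
      ultimately show ?thesis by linarith
    qed
    finally show ?thesis .
  qed
  then show "AE \<omega> in M. norm (f \<omega> * g \<omega>) \<le> norm ((norm (U \<omega>))\<^sup>2 + (norm (V \<omega>))\<^sup>2)"
    by simp
qed measurable

lemma (in sigma_finite_subalgebra) integral_inner_cond_exp_zero:
  fixes w v y :: "'a \<Rightarrow> 'b::euclidean_space"
  assumes w: "L2_measurable M F w" and v: "L2_measurable M M v" and y: "L2_measurable M M y"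
    and unbiased: "\<forall>b\<in>Basis. AE \<omega> in M. real_cond_exp M F (\<lambda>\<omega>. inner (v \<omega>) b) \<omega> = inner (y \<omega>) b"
  shows "integrable M (\<lambda>\<omega>. inner (v \<omega> - y \<omega>) (w \<omega>))"
    and "(\<integral>\<omega>. inner (v \<omega> - y \<omega>) (w \<omega>) \<partial>M) = 0"
proof -
  have [measurable]: "w \<in> borel_measurable F" "w \<in> borel_measurable M"
      "v \<in> borel_measurable M" "y \<in> borel_measurable M"
    using w v y measurable_from_subalg[OF subalg] by (auto simp: L2_measurable_def)
  have L2: "integrable M (\<lambda>\<omega>. (norm (w \<omega>))\<^sup>2)" "integrable M (\<lambda>\<omega>. (norm (v \<omega>))\<^sup>2)"
      "integrable M (\<lambda>\<omega>. (norm (y \<omega>))\<^sup>2)"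
    using w v y by (auto simp: L2_measurable_def)
  have coord: "integrable M (\<lambda>\<omega>. (inner (v \<omega>) b - inner (y \<omega>) b) * inner (w \<omega>) b)
      \<and> (\<integral>\<omega>. (inner (v \<omega>) b - inner (y \<omega>) b) * inner (w \<omega>) b \<partial>M) = 0" if b: "b \<in> Basis" for b
  proof -
    have [measurable]: "(\<lambda>\<omega>. inner (w \<omega>) b) \<in> borel_measurable F" by measurable
    have wv: "integrable M (\<lambda>\<omega>. inner (w \<omega>) b * inner (v \<omega>) b)"
      using b L2 by (intro integrable_mult_of_L2_bounds[where U = w and V = v] Basis_le_norm) auto
    have wy: "integrable M (\<lambda>\<omega>. inner (w \<omega>) b * inner (y \<omega>) b)"
      using b L2 by (intro integrable_mult_of_L2_bounds[where U = w and V = y] Basis_le_norm) auto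
    have "(\<integral>\<omega>. inner (w \<omega>) b * inner (v \<omega>) b \<partial>M)
        = (\<integral>\<omega>. inner (w \<omega>) b * real_cond_exp M F (\<lambda>\<omega>. inner (v \<omega>) b) \<omega> \<partial>M)"
      by (rule real_cond_exp_intg(2)[OF wv, symmetric]) measurable
    also have "\<dots> = (\<integral>\<omega>. inner (w \<omega>) b * inner (y \<omega>) b \<partial>M)"
      using bspec[OF unbiased b] by (intro integral_cong_AE) (auto elim!: AE_mp)
    finally have "(\<integral>\<omega>. inner (w \<omega>) b * inner (v \<omega>) b - inner (w \<omega>) b * inner (y \<omega>) b \<partial>M) = 0"
      using wv wy by simp
    then show ?thesis
      using wv wy by (simp add: algebra_simps)
  qed
  have inner_eq: "inner (v \<omega> - y \<omega>) (w \<omega>)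
      = (\<Sum>b\<in>Basis. (inner (v \<omega>) b - inner (y \<omega>) b) * inner (w \<omega>) b)" for \<omega>
    by (subst euclidean_inner) (simp add: inner_diff_left)
  show "integrable M (\<lambda>\<omega>. inner (v \<omega> - y \<omega>) (w \<omega>))"
    unfolding inner_eq using coord by auto
  show "(\<integral>\<omega>. inner (v \<omega> - y \<omega>) (w \<omega>) \<partial>M) = 0"
    unfolding inner_eq using coord by (simp add: Bochner_Integration.integral_sum)
qed

lemma (in sigma_finite_subalgebra) integral_le_of_cond_exp_le:
  assumes "prob_space M" "integrable M h" "AE \<omega> in M. real_cond_exp M F h \<omega> \<le> c"
  shows "(\<integral>\<omega>. h \<omega> \<partial>M) \<le> c"
proof -
  interpret prob_space M by (rule assms(1))
  have "(\<integral>\<omega>. h \<omega> \<partial>M) = (\<integral>\<omega>. real_cond_exp M F h \<omega> \<partial>M)"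
    using real_cond_exp_int(2)[OF assms(2)] by simp
  also have "\<dots> \<le> (\<integral>\<omega>. c \<partial>M)"
    by (rule integral_mono_AE[OF real_cond_exp_int(1)[OF assms(2)] _ assms(3)]) simp
  also have "\<dots> = c"
    by (simp add: prob_space)
  finally show ?thesis .
qed

section \<open>Stochastic primal-dual sliding\<close>

lemma inner_gradient_error_le:
  fixes g v x xh xo :: "'a::real_inner"
  assumes p: "0 < p"
  shows "inner g (xh - x) + p / 4 * (norm (xh - xo))\<^sup>2
    \<le> inner v (xh - x) + p / 2 * (norm (xh - xo))\<^sup>2 + (norm (v - g))\<^sup>2 / p + inner (v - g) (x - xo)"
proof -
  have "inner (g - v) (xh - xo) \<le> norm (v - g) * norm (xh - xo)"
    using norm_cauchy_schwarz[of "g - v" "xh - xo"] by (simp add: norm_minus_commute)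
  also have "\<dots> \<le> (norm (v - g))\<^sup>2 / p + p / 4 * (norm (xh - xo))\<^sup>2"
    using mult_le_weighted_squares[of "p / 2" "norm (v - g)" "norm (xh - xo)"] p by simp
  finally show ?thesis
    by (simp add: inner_diff_left inner_diff_right algebra_simps)
qed

text \<open>\<open>F\<close> and \<open>G\<close> are the smooth part of the objective and its gradient, \<open>\<Omega>\<close> the strongly
  convex part, and \<open>Filt k\<close> the information available after round \<open>k\<close>.\<close>
locale spds =
  fixes A :: "'v::euclidean_space \<Rightarrow> 'w::euclidean_space" and At :: "'w \<Rightarrow> 'v"
    and F :: "'v \<Rightarrow> real" and G :: "'v \<Rightarrow> 'v" and L :: real
    and \<Omega> :: "'v \<Rightarrow> real" and \<mu> :: real and S :: "'v set" and xstar :: 'v and zstar :: 'w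
    and M :: "'a measure" and Filt :: "nat \<Rightarrow> 'a measure" and \<sigma> :: real
    and N :: nat and T c :: "nat \<Rightarrow> nat"
    and \<beta> p lam \<tau> :: "nat \<Rightarrow> real" and q \<eta> \<alpha> :: "nat \<Rightarrow> nat \<Rightarrow> real"
    and x0 xl0 :: 'v and xs :: "nat \<Rightarrow> nat \<Rightarrow> 'a \<Rightarrow> 'v" and zs :: "nat \<Rightarrow> nat \<Rightarrow> 'a \<Rightarrow> 'w"
    and xl v :: "nat \<Rightarrow> 'a \<Rightarrow> 'v"
  assumes A_bounded_linear: "bounded_linear A"
    and A_adjoint: "\<And>u z. inner (A u) z = inner u (At z)"
    and F_convex: "convex_on UNIV F"
    and F_gradient: "\<And>u. (F has_derivative (\<lambda>h. inner (G u) h)) (at u)"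
    and G_lipschitz: "\<And>u w. norm (G u - G w) \<le> L * norm (u - w)" and L_nonneg: "0 \<le> L"
    and \<Omega>_strongly_convex: "strongly_convex_on UNIV 1 \<Omega>" and \<mu>_nonneg: "0 \<le> \<mu>"
    and S_convex: "convex S"
    and saddle: "is_saddle_point S (\<lambda>x. F x + \<mu> * \<Omega> x) A xstar zstar"
    and N_pos: "1 \<le> N"
    and T_pos: "\<forall>k\<in>{1..N}. 1 \<le> T k"
    and \<beta>_pos: "\<forall>k\<in>{1..N}. 0 < \<beta> k" and p_pos: "\<forall>k\<in>{1..N}. 0 < p k"
    and q_pos: "\<forall>k\<in>{1..N}. \<forall>t\<in>{1..T k}. 0 < q k t"
    and \<eta>_pos: "\<forall>k\<in>{1..N}. \<forall>t\<in>{1..T k}. 0 < \<eta> k t"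
    and lam_nonneg: "\<forall>k\<in>{1..N}. 0 \<le> lam k" and \<tau>_nonneg: "\<forall>k\<in>{1..N}. 0 \<le> \<tau> k"
    and \<alpha>_nonneg: "\<forall>k\<in>{1..N}. \<forall>t\<in>{1..T k}. 0 \<le> \<alpha> k t"
    and cond_i: "\<forall>k\<in>{2..N}.
        \<beta> k * \<tau> k \<le> \<beta> (k - 1) * (\<tau> (k - 1) + 1)
      \<and> \<beta> (k - 1) = \<beta> k * lam k
      \<and> 2 * L * lam k \<le> p (k - 1) * \<tau> k
      \<and> \<beta> k * real (T (k - 1)) * \<alpha> k 1 = \<beta> (k - 1) * real (T k)
      \<and> \<alpha> k 1 * (onorm A)\<^sup>2 \<le> \<eta> (k - 1) (T (k - 1)) * q k 1
      \<and> \<beta> k * real (T (k - 1)) * q k 1 \<le> \<beta> (k - 1) * real (T k) * q (k - 1) (T (k - 1))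
      \<and> \<beta> k * real (T (k - 1)) * (\<eta> k 1 + p k * real (T k))
          \<le> \<beta> (k - 1) * real (T k) * (\<mu> + \<eta> (k - 1) (T (k - 1)) + p (k - 1))"
    and cond_ii: "\<forall>k\<in>{1..N}. \<forall>t\<in>{2..T k}.
        \<alpha> k t = 1 \<and> (onorm A)\<^sup>2 \<le> \<eta> k (t - 1) * q k t \<and> q k t \<le> q k (t - 1)
      \<and> \<eta> k t \<le> \<mu> + \<eta> k (t - 1) + p k"
    and cond_iii: "\<tau> 1 = 0" "2 * L \<le> p N * (\<tau> N + 1)" "(onorm A)\<^sup>2 \<le> \<eta> N (T N) * q N (T N)"
    and prob: "prob_space M"
    and Filt_sub: "\<forall>k. subalgebra M (Filt k)"
    and Filt_sigma_finite: "\<forall>k. sigma_finite_subalgebra M (Filt k)"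
    and Filt_mono: "\<forall>k. sets (Filt k) \<subseteq> sets (Filt (Suc k))"
    and v_measurable: "\<forall>k\<in>{1..N}. v k \<in> borel_measurable (Filt k)"
    and v_var_integrable: "\<forall>k\<in>{1..N}. integrable M (\<lambda>\<omega>. (norm (v k \<omega> - G (xl k \<omega>)))\<^sup>2)"
    and v_unbiased: "\<forall>k\<in>{1..N}. \<forall>b\<in>Basis. AE \<omega> in M.
        real_cond_exp M (Filt (k - 1)) (\<lambda>\<omega>. inner (v k \<omega>) b) \<omega> = inner (G (xl k \<omega>)) b"
    and v_var: "\<forall>k\<in>{1..N}. AE \<omega> in M.
        real_cond_exp M (Filt (k - 1)) (\<lambda>\<omega>. (norm (v k \<omega> - G (xl k \<omega>)))\<^sup>2) \<omega> \<le> \<sigma>\<^sup>2 / real (c k)"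
    and xl_0: "\<forall>\<omega>. xl 0 \<omega> = xl0"
    and xl_step: "\<forall>k\<in>{1..N}. \<forall>\<omega>\<in>space M. xl k \<omega> =
        (1 / (1 + \<tau> k)) *\<^sub>R (spds_xtilde x0 T xs lam k \<omega> + \<tau> k *\<^sub>R xl (k - 1) \<omega>)"
    and xs_init: "\<forall>k\<in>{1..N}. \<forall>\<omega>\<in>space M. xs k 0 \<omega> = spds_xout x0 T xs (k - 1) \<omega>"
    and zs_init: "\<forall>k\<in>{1..N}. \<forall>\<omega>\<in>space M.
        zs k 0 \<omega> = (if k = 1 then 0 else zs (k - 1) (T (k - 1)) \<omega>)"
    and zs_step: "\<forall>k\<in>{1..N}. \<forall>t\<in>{1..T k}. \<forall>\<omega>\<in>space M.
        zs k t \<omega> = zs k (t - 1) \<omega> + (1 / q k t) *\<^sub>R A (xs k (t - 1) \<omega> + \<alpha> k t *\<^sub>R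
           (xs k (t - 1) \<omega> - (if t = 1 then spds_xprev x0 T xs k \<omega> else xs k (t - 2) \<omega>)))"
    and xs_step: "\<forall>k\<in>{1..N}. \<forall>t\<in>{1..T k}. \<forall>\<omega>\<in>space M.
        is_arg_min (\<lambda>x. \<mu> * \<Omega> x + inner (v k \<omega> + At (zs k t \<omega>)) x
                       + \<eta> k t / 2 * (norm (xs k (t - 1) \<omega> - x))\<^sup>2
                       + p k / 2 * (norm (spds_xout x0 T xs (k - 1) \<omega> - x))\<^sup>2)
                   (\<lambda>x. x \<in> S) (xs k t \<omega>)"
begin

definition "x_avg \<omega> = (1 / (\<Sum>k\<in>{1..N}. \<beta> k)) *\<^sub>R (\<Sum>k\<in>{1..N}. \<beta> k *\<^sub>R spds_xhat x0 T xs k \<omega>)"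

definition "noise \<omega> = (\<Sum>k\<in>{1..N}. \<beta> k * ((norm (v k \<omega> - G (xl k \<omega>)))\<^sup>2 / p k
  + inner (v k \<omega> - G (xl k \<omega>)) (xstar - spds_xout x0 T xs (k - 1) \<omega>)))"

lemma xs_prox_step:
  "k \<in> {1..N} \<Longrightarrow> t \<in> {1..T k} \<Longrightarrow> \<omega> \<in> space M \<Longrightarrow>
    is_arg_min (prox_objective \<Omega> \<mu> (v k \<omega> + At (zs k t \<omega>)) (\<eta> k t) (xs k (t - 1) \<omega>)
      (p k) (spds_xout x0 T xs (k - 1) \<omega>)) (\<lambda>x. x \<in> S) (xs k t \<omega>)"
  using xs_step unfolding prox_objective_def[abs_def] by blast

lemma A_linear: "linear A"
  using A_bounded_linear bounded_linear.linear by blast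

lemma \<beta>_sum_pos: "0 < (\<Sum>k\<in>{1..N}. \<beta> k)"
  using \<beta>_pos N_pos by (intro sum_pos) auto

lemma A_xstar: "A xstar = 0"
proof -
  have "inner (A xstar) (zstar + A xstar) \<le> inner (A xstar) zstar"
    using saddle by (simp add: is_saddle_point_def)
  then have "(norm (A xstar))\<^sup>2 \<le> 0"
    by (simp add: inner_add_right power2_norm_eq_inner)
  then show ?thesis by simp
qed

lemma xstar_in_S: "xstar \<in> S"
  using saddle by (simp add: is_saddle_point_def)

lemma saddle_lower_bound: "x \<in> S \<Longrightarrow> F xstar + \<mu> * \<Omega> xstar \<le> F x + \<mu> * \<Omega> x + inner (A x) zstar"
  using saddle A_xstar by (simp add: is_saddle_point_def)

lemma inner_loops_at:
  assumes \<omega>: "\<omega> \<in> space M"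
  shows "pds_inner_loops A At (onorm A) \<Omega> \<mu> S N T \<beta> p q \<eta> \<alpha> x0
    (\<lambda>k t. xs k t \<omega>) (\<lambda>k t. zs k t \<omega>) (\<lambda>k. v k \<omega>)"
proof (rule pds_inner_loops.intro)
  show "norm (A u) \<le> onorm A * norm u" for u
    using onorm[OF A_bounded_linear] .
  show "\<forall>k\<in>{1..N}. xs k 0 \<omega> = (if k = 1 then x0 else xs (k - 1) (T (k - 1)) \<omega>)"
    using xs_init \<omega> by (auto simp: spds_xout_def)
  show "\<forall>k\<in>{1..N}. \<forall>t\<in>{1..T k}. zs k t \<omega> = zs k (t - 1) \<omega> + (1 / q k t) *\<^sub>R A (xs k (t - 1) \<omega>
      + \<alpha> k t *\<^sub>R (xs k (t - 1) \<omega> - (if t = 1 then (if k \<le> 1 then x0 else xs (k - 1) (T (k - 1) - 1) \<omega>)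
        else xs k (t - 2) \<omega>)))"
    using zs_step \<omega> by (simp add: spds_xprev_def)
  show "\<forall>k\<in>{1..N}. \<forall>t\<in>{1..T k}. is_arg_min (prox_objective \<Omega> \<mu> (v k \<omega> + At (zs k t \<omega>)) (\<eta> k t)
      (xs k (t - 1) \<omega>) (p k) (xs k 0 \<omega>)) (\<lambda>x. x \<in> S) (xs k t \<omega>)"
    using xs_prox_step xs_init \<omega> by simp
qed (use A_linear A_adjoint \<Omega>_strongly_convex \<mu>_nonneg S_convex N_pos T_pos \<beta>_pos p_pos q_pos
    \<eta>_pos \<alpha>_nonneg cond_i cond_ii cond_iii zs_init \<omega> in auto)

lemma outer_loop_at:
  assumes \<omega>: "\<omega> \<in> space M"
  shows "accelerated_outer_loop F G L N \<beta> p lam \<tau> x0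
    (\<lambda>k. spds_xout x0 T xs k \<omega>) (\<lambda>k. spds_xhat x0 T xs k \<omega>) (\<lambda>k. xl k \<omega>)"
  using F_convex F_gradient G_lipschitz L_nonneg N_pos \<beta>_pos p_pos lam_nonneg \<tau>_nonneg cond_i cond_iii
    xl_step \<omega>
  by unfold_locales (auto simp: spds_xout_def spds_xhat_def spds_xtilde_def)

definition "round_gap \<omega> z k = \<mu> * \<Omega> (spds_xhat x0 T xs k \<omega>) - \<mu> * \<Omega> xstar
  + inner (v k \<omega>) (spds_xhat x0 T xs k \<omega> - xstar)
  + p k / 2 * (norm (spds_xhat x0 T xs k \<omega> - spds_xout x0 T xs (k - 1) \<omega>))\<^sup>2
  + inner (A (spds_xhat x0 T xs k \<omega>)) z"

lemma round_gap_sum_le: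
  assumes \<omega>: "\<omega> \<in> space M"
  shows "(\<Sum>k\<in>{1..N}. \<beta> k * round_gap \<omega> z k)
    \<le> \<beta> 1 / 2 * (\<eta> 1 1 / real (T 1) + p 1) * (norm (x0 - xstar))\<^sup>2
      + \<beta> 1 * q 1 1 / (2 * real (T 1)) * (norm z)\<^sup>2"
proof -
  interpret I: pds_inner_loops A At "onorm A" \<Omega> \<mu> S N T \<beta> p q \<eta> \<alpha> x0
    "\<lambda>k t. xs k t \<omega>" "\<lambda>k t. zs k t \<omega>" "\<lambda>k. v k \<omega>"
    by (rule inner_loops_at[OF \<omega>])
  have "\<beta> k * round_gap \<omega> z k \<le> I.weight k * (\<Sum>t\<in>{1..T k}. I.step_gap xstar z k t)"
    if k: "k \<in> {1..N}" for k
  proof -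
    have T: "1 \<le> T k" using T_pos k by auto
    have "spds_xhat x0 T xs k \<omega> = (1 / real (T k)) *\<^sub>R (\<Sum>t\<in>{1..T k}. xs k t \<omega>)"
      "xs k 0 \<omega> = spds_xout x0 T xs (k - 1) \<omega>"
      using k \<omega> xs_init by (auto simp: spds_xhat_def)
    with I.step_gap_sum_ge_mean[OF k A_xstar, of z]
    have "real (T k) * round_gap \<omega> z k \<le> (\<Sum>t\<in>{1..T k}. I.step_gap xstar z k t)"
      by (simp add: round_gap_def)
    from mult_left_mono[OF this less_imp_le[OF I.weight_pos[OF k]]]
    show ?thesis
      using T by (simp add: I.weight_def)
  qed
  then have "(\<Sum>k\<in>{1..N}. \<beta> k * round_gap \<omega> z k)
      \<le> (\<Sum>k\<in>{1..N}. I.weight k * (\<Sum>t\<in>{1..T k}. I.step_gap xstar z k t))"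
    by (rule sum_mono)
  also have "\<dots> \<le> \<beta> 1 / 2 * (\<eta> 1 1 / real (T 1) + p 1) * (norm (x0 - xstar))\<^sup>2
      + \<beta> 1 * q 1 1 / (2 * real (T 1)) * (norm z)\<^sup>2"
    using I.weighted_step_gap_sum_le[OF xstar_in_S, of z] by (simp add: norm_minus_commute)
  finally show ?thesis .
qed

lemma objective_gap_le_linearized:
  assumes \<omega>: "\<omega> \<in> space M"
  shows "(\<Sum>k\<in>{1..N}. \<beta> k) * (F (x_avg \<omega>) + \<mu> * \<Omega> (x_avg \<omega>) - (F xstar + \<mu> * \<Omega> xstar)
      + inner (A (x_avg \<omega>)) z)
    \<le> (\<Sum>k\<in>{1..N}. \<beta> k * (inner (G (xl k \<omega>)) (spds_xhat x0 T xs k \<omega> - xstar)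
      + p k / 4 * (norm (spds_xhat x0 T xs k \<omega> - spds_xout x0 T xs (k - 1) \<omega>))\<^sup>2
      + \<mu> * \<Omega> (spds_xhat x0 T xs k \<omega>) - \<mu> * \<Omega> xstar + inner (A (spds_xhat x0 T xs k \<omega>)) z))"
proof -
  interpret O: accelerated_outer_loop F G L N \<beta> p lam \<tau> x0
    "\<lambda>k. spds_xout x0 T xs k \<omega>" "\<lambda>k. spds_xhat x0 T xs k \<omega>" "\<lambda>k. xl k \<omega>"
    by (rule outer_loop_at[OF \<omega>])
  define B where "B = (\<Sum>k\<in>{1..N}. \<beta> k)"
  define xh where "xh k = spds_xhat x0 T xs k \<omega>" for k
  define lin where "lin k = inner (G (xl k \<omega>)) (xh k - xstar)
    + p k / 4 * (norm (xh k - spds_xout x0 T xs (k - 1) \<omega>))\<^sup>2" for k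
  have x_avg: "x_avg \<omega> = (1 / B) *\<^sub>R (\<Sum>k\<in>{1..N}. \<beta> k *\<^sub>R xh k)"
    by (simp add: x_avg_def B_def xh_def)
  have "B * (F (x_avg \<omega>) - F xstar) \<le> (\<Sum>k\<in>{1..N}. \<beta> k * lin k)"
    unfolding B_def xh_def lin_def by (rule O.weighted_mean_gap_le) (simp add: x_avg_def)
  moreover have "B * \<Omega> (x_avg \<omega>) \<le> (\<Sum>k\<in>{1..N}. \<beta> k * \<Omega> (xh k))"
  proof -
    have "convex_on UNIV \<Omega>"
      by (rule strongly_convex_on_imp_convex_on[OF \<Omega>_strongly_convex]) simp
    from convex_on_weighted_mean[OF this, of "{1..N}" \<beta> xh]
    show ?thesis
      using \<beta>_pos N_pos \<beta>_sum_pos unfolding x_avg B_def by (simp add: field_simps)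
  qed
  moreover have "B * inner (A (x_avg \<omega>)) z = (\<Sum>k\<in>{1..N}. \<beta> k * inner (A (xh k)) z)"
    using \<beta>_sum_pos unfolding x_avg B_def
    by (simp add: linear_scale[OF A_linear] linear_sum[OF A_linear] inner_sum_left)
  moreover have "(\<Sum>k\<in>{1..N}. \<beta> k * (lin k + \<mu> * \<Omega> (xh k) - \<mu> * \<Omega> xstar + inner (A (xh k)) z))
      = (\<Sum>k\<in>{1..N}. \<beta> k * lin k) + \<mu> * (\<Sum>k\<in>{1..N}. \<beta> k * \<Omega> (xh k)) - B * (\<mu> * \<Omega> xstar)
        + (\<Sum>k\<in>{1..N}. \<beta> k * inner (A (xh k)) z)"
    unfolding B_def sum_distrib_left sum_distrib_right sum.distrib[symmetric] sum_subtractf[symmetric]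
    by (simp add: algebra_simps)
  ultimately have "B * (F (x_avg \<omega>) + \<mu> * \<Omega> (x_avg \<omega>) - (F xstar + \<mu> * \<Omega> xstar) + inner (A (x_avg \<omega>)) z)
      \<le> (\<Sum>k\<in>{1..N}. \<beta> k * (lin k + \<mu> * \<Omega> (xh k) - \<mu> * \<Omega> xstar + inner (A (xh k)) z))"
    using mult_left_mono[OF _ \<mu>_nonneg, of "B * \<Omega> (x_avg \<omega>)" "\<Sum>k\<in>{1..N}. \<beta> k * \<Omega> (xh k)"]
    by (simp add: algebra_simps)
  then show ?thesis
    unfolding B_def lin_def xh_def .
qed

lemma gap_le_pointwise:
  assumes \<omega>: "\<omega> \<in> space M"
  shows "(\<Sum>k\<in>{1..N}. \<beta> k) * (F (x_avg \<omega>) + \<mu> * \<Omega> (x_avg \<omega>) - (F xstar + \<mu> * \<Omega> xstar)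
      + inner (A (x_avg \<omega>)) z)
    \<le> \<beta> 1 / 2 * (\<eta> 1 1 / real (T 1) + p 1) * (norm (x0 - xstar))\<^sup>2
      + \<beta> 1 * q 1 1 / (2 * real (T 1)) * (norm z)\<^sup>2 + noise \<omega>"
proof -
  have "\<beta> k * (inner (G (xl k \<omega>)) (spds_xhat x0 T xs k \<omega> - xstar)
        + p k / 4 * (norm (spds_xhat x0 T xs k \<omega> - spds_xout x0 T xs (k - 1) \<omega>))\<^sup>2
        + \<mu> * \<Omega> (spds_xhat x0 T xs k \<omega>) - \<mu> * \<Omega> xstar + inner (A (spds_xhat x0 T xs k \<omega>)) z)
      \<le> \<beta> k * round_gap \<omega> z k + \<beta> k * ((norm (v k \<omega> - G (xl k \<omega>)))\<^sup>2 / p k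
        + inner (v k \<omega> - G (xl k \<omega>)) (xstar - spds_xout x0 T xs (k - 1) \<omega>))"
    if k: "k \<in> {1..N}" for k
  proof -
    have "0 < p k" "0 \<le> \<beta> k" using bspec[OF p_pos k] bspec[OF \<beta>_pos k] by simp_all
    from mult_left_mono[OF inner_gradient_error_le[OF this(1), where g = "G (xl k \<omega>)" and v = "v k \<omega>"
          and x = xstar and xh = "spds_xhat x0 T xs k \<omega>" and xo = "spds_xout x0 T xs (k - 1) \<omega>"] this(2)]
    show ?thesis
      by (simp add: round_gap_def algebra_simps)
  qed
  then have "(\<Sum>k\<in>{1..N}. \<beta> k * (inner (G (xl k \<omega>)) (spds_xhat x0 T xs k \<omega> - xstar)
        + p k / 4 * (norm (spds_xhat x0 T xs k \<omega> - spds_xout x0 T xs (k - 1) \<omega>))\<^sup>2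
        + \<mu> * \<Omega> (spds_xhat x0 T xs k \<omega>) - \<mu> * \<Omega> xstar + inner (A (spds_xhat x0 T xs k \<omega>)) z))
      \<le> (\<Sum>k\<in>{1..N}. \<beta> k * round_gap \<omega> z k) + noise \<omega>"
    unfolding noise_def sum.distrib[symmetric] by (rule sum_mono)
  then show ?thesis
    using objective_gap_le_linearized[OF \<omega>, of z] round_gap_sum_le[OF \<omega>, of z] by linarith
qed

lemma Filt_subalgebra: "subalgebra M (Filt k)"
  using Filt_sub by blast

lemma Filt_subalgebra_le:
  assumes "j \<le> k"
  shows "subalgebra (Filt k) (Filt j)"
proof -
  have "sets (Filt j) \<subseteq> sets (Filt k)"
    by (rule lift_Suc_mono_le[of "\<lambda>k. sets (Filt k)"]) (use Filt_mono assms in auto)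
  moreover have "space (Filt j) = space (Filt k)"
    using Filt_subalgebra[of j] Filt_subalgebra[of k] by (simp add: subalgebra_def)
  ultimately show ?thesis by (simp add: subalgebra_def)
qed

lemma L2_measurable_G:
  assumes "subalgebra M H" "L2_measurable M H w"
  shows "L2_measurable M H (\<lambda>\<omega>. G (w \<omega>))"
proof (rule L2_measurable_compose[OF prob assms _ _ L_nonneg])
  show "continuous_on UNIV G"
    using G_lipschitz L_nonneg
    by (intro lipschitz_on_continuous_on[of L] lipschitz_onI) (auto simp: dist_norm)
  show "norm (G u) \<le> norm (G 0) + L * norm u" for u
    using G_lipschitz[of u 0] norm_triangle_ineq2[of "G u" "G 0"] by simp
qed

lemma v_L2_measurable:
  assumes k: "k \<in> {1..N}" and xl: "L2_measurable M (Filt (k - 1)) (xl k)"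
  shows "L2_measurable M (Filt k) (v k)"
proof -
  have "L2_measurable M (Filt k) (\<lambda>\<omega>. G (xl k \<omega>))"
    using xl Filt_subalgebra_le[of "k - 1" k]
    by (intro L2_measurable_G Filt_subalgebra L2_measurable_subalgebra[of "Filt k"]) auto
  moreover have "L2_measurable M (Filt k) (\<lambda>\<omega>. v k \<omega> - G (xl k \<omega>))"
    using bspec[OF v_measurable k] bspec[OF v_var_integrable k] calculation
    by (auto simp: L2_measurable_def intro: borel_measurable_diff)
  ultimately show ?thesis
    using L2_measurable_add[OF Filt_subalgebra] by fastforce
qed

definition "z_out k \<omega> = (if k = 0 then 0 else zs k (T k) \<omega>)"

text \<open>The invariant of the induction over rounds: what round \<open>K + 1\<close> needs from round \<open>K\<close>.\<close>
definition "round_L2 K \<longleftrightarrow>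
  L2_measurable M (Filt K) (spds_xout x0 T xs K) \<and> L2_measurable M (Filt K) (spds_xhat x0 T xs K)
  \<and> L2_measurable M (Filt K) (z_out K) \<and> L2_measurable M (Filt K) (spds_xprev x0 T xs (Suc K))
  \<and> (Suc K \<le> N \<longrightarrow> L2_measurable M (Filt K) (xl (Suc K)))"

lemma At_bounded_linear: "bounded_linear At"
proof -
  have "adjoint A = At"
    using A_adjoint by (intro adjoint_unique) simp
  then show ?thesis
    using adjoint_linear[OF A_linear] linear_conv_bounded_linear by metis
qed

lemma prox_iterate_L2_measurable:
  assumes K: "K \<in> {1..N}" and t: "Suc t \<in> {1..T K}"
    and v: "L2_measurable M (Filt K) (v K)" and xo: "L2_measurable M (Filt K) (spds_xout x0 T xs (K - 1))"
    and x: "L2_measurable M (Filt K) (xs K t)" and z: "L2_measurable M (Filt K) (zs K (Suc t))"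
  shows "L2_measurable M (Filt K) (xs K (Suc t))"
proof -
  note sub = Filt_subalgebra[of K]
  have \<eta>: "0 < \<eta> K (Suc t)" and p: "0 < p K"
    using bspec[OF bspec[OF \<eta>_pos K] t] bspec[OF p_pos K] by simp_all
  define e where "e \<omega> = v K \<omega> + At (zs K (Suc t) \<omega>) - \<eta> K (Suc t) *\<^sub>R xs K t \<omega>
    - p K *\<^sub>R spds_xout x0 T xs (K - 1) \<omega>" for \<omega>
  have "L2_measurable M (Filt K) e"
    unfolding e_def
    by (intro L2_measurable_diff[OF prob sub] L2_measurable_add[OF sub] L2_measurable_scaleR[OF prob sub]
        L2_measurable_bounded_linear[OF prob sub _ At_bounded_linear] x z v xo)
  moreover have "0 < \<mu> + \<eta> K (Suc t) + p K"
    using \<mu>_nonneg \<eta> p by simp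
  ultimately show ?thesis
  proof (rule L2_measurable_lipschitz_dominated[OF prob sub])
    fix \<omega> \<omega>' assume \<omega>: "\<omega> \<in> space M" "\<omega>' \<in> space M"
    from prox_arg_min_lipschitz[OF \<Omega>_strongly_convex \<mu>_nonneg less_imp_le[OF \<eta>] less_imp_le[OF p] S_convex
        xs_prox_step[OF K t \<omega>(1)] xs_prox_step[OF K t \<omega>(2)]]
    show "(\<mu> + \<eta> K (Suc t) + p K) * norm (xs K (Suc t) \<omega> - xs K (Suc t) \<omega>') \<le> norm (e \<omega> - e \<omega>')"
      by (simp add: e_def)
  qed
qed

lemma dual_iterate_L2_measurable:
  assumes K: "K \<in> {1..N}" and t: "Suc t \<in> {1..T K}"
    and x: "L2_measurable M (Filt K) (xs K t)" and z: "L2_measurable M (Filt K) (zs K t)"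
    and prev: "L2_measurable M (Filt K) (if t = 0 then spds_xprev x0 T xs K else xs K (t - 1))"
  shows "L2_measurable M (Filt K) (zs K (Suc t))"
proof (rule L2_measurable_cong[OF Filt_subalgebra])
  note sub = Filt_subalgebra[of K]
  show "L2_measurable M (Filt K) (\<lambda>\<omega>. zs K t \<omega> + (1 / q K (Suc t)) *\<^sub>R A (xs K t \<omega>
      + \<alpha> K (Suc t) *\<^sub>R (xs K t \<omega> - (if t = 0 then spds_xprev x0 T xs K else xs K (t - 1)) \<omega>)))"
    by (intro L2_measurable_add[OF sub] L2_measurable_scaleR[OF prob sub]
        L2_measurable_bounded_linear[OF prob sub _ A_bounded_linear] L2_measurable_diff[OF prob sub] x z prev)
  show "\<omega> \<in> space M \<Longrightarrow> zs K t \<omega> + (1 / q K (Suc t)) *\<^sub>R A (xs K t \<omega>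
      + \<alpha> K (Suc t) *\<^sub>R (xs K t \<omega> - (if t = 0 then spds_xprev x0 T xs K else xs K (t - 1)) \<omega>))
      = zs K (Suc t) \<omega>" for \<omega>
    using bspec[OF bspec[OF zs_step K] t] by (simp add: numeral_2_eq_2)
qed

lemma inner_iterates_L2_measurable:
  assumes K: "K \<in> {1..N}" and prev: "round_L2 (K - 1)"
  shows "t \<le> T K \<Longrightarrow> L2_measurable M (Filt K) (xs K t) \<and> L2_measurable M (Filt K) (zs K t)"
proof -
  note sub = Filt_subalgebra[of K]
  have lift: "L2_measurable M (Filt (K - 1)) w \<Longrightarrow> L2_measurable M (Filt K) w" for w
    by (rule L2_measurable_subalgebra[OF Filt_subalgebra_le]) auto
  have xo: "L2_measurable M (Filt K) (spds_xout x0 T xs (K - 1))"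
    and xprev: "L2_measurable M (Filt K) (spds_xprev x0 T xs K)"
    and zo: "L2_measurable M (Filt K) (z_out (K - 1))"
    and xl: "L2_measurable M (Filt (K - 1)) (xl K)"
    using prev K by (auto simp: round_L2_def intro: lift)
  have v: "L2_measurable M (Filt K) (v K)"
    by (rule v_L2_measurable[OF K xl])
  show "t \<le> T K \<Longrightarrow> L2_measurable M (Filt K) (xs K t) \<and> L2_measurable M (Filt K) (zs K t)"
  proof (induction t rule: less_induct)
    case (less t)
    show ?case
    proof (cases t)
      case 0
      have "L2_measurable M (Filt K) (xs K 0)"
        by (rule L2_measurable_cong[OF sub xo]) (use xs_init K in auto)
      moreover have "L2_measurable M (Filt K) (zs K 0)"
        by (rule L2_measurable_cong[OF sub zo]) (use zs_init K in \<open>auto simp: z_out_def\<close>)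
      ultimately show ?thesis
        using 0 by simp
    next
      case (Suc t)
      then have t: "Suc t \<in> {1..T K}" and x_t: "L2_measurable M (Filt K) (xs K t)"
        and z_t: "L2_measurable M (Filt K) (zs K t)"
        using less by auto
      have "L2_measurable M (Filt K) (if t = 0 then spds_xprev x0 T xs K else xs K (t - 1))"
        using xprev less Suc by auto
      from dual_iterate_L2_measurable[OF K t x_t z_t this]
      have z: "L2_measurable M (Filt K) (zs K (Suc t))" .
      have x: "L2_measurable M (Filt K) (xs K (Suc t))"
        by (rule prox_iterate_L2_measurable[OF K t v xo x_t z])
      show ?thesis
        using x z Suc by simp
    qed
  qed
qed

lemma round_L2_0: "round_L2 0"
proof -
  note const = L2_measurable_const[OF prob Filt_subalgebra[of 0]]
  have "L2_measurable M (Filt 0) (xl 1)" if "1 \<le> N"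
    by (rule L2_measurable_cong[OF Filt_subalgebra const[of "(1 / (1 + \<tau> 1)) *\<^sub>R (x0 + \<tau> 1 *\<^sub>R xl0)"]])
      (use xl_step xl_0 that in \<open>auto simp: spds_xtilde_def spds_xout_def spds_xhat_def\<close>)
  then show ?thesis
    unfolding round_L2_def
    by (auto simp: spds_xout_def[abs_def] spds_xhat_def[abs_def] spds_xprev_def[abs_def] z_out_def[abs_def]
        intro: const)
qed

lemma round_L2_Suc:
  assumes K: "Suc K \<le> N" and prev: "round_L2 K"
  shows "round_L2 (Suc K)"
proof -
  note sub = Filt_subalgebra[of "Suc K"]
  have K': "Suc K \<in> {1..N}" using K by simp
  then have T: "1 \<le> T (Suc K)" using T_pos by auto
  have iter: "L2_measurable M (Filt (Suc K)) (xs (Suc K) t)" "L2_measurable M (Filt (Suc K)) (zs (Suc K) t)"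
    if "t \<le> T (Suc K)" for t
    using inner_iterates_L2_measurable[OF K'] prev that by simp_all
  have lift: "L2_measurable M (Filt K) w \<Longrightarrow> L2_measurable M (Filt (Suc K)) w" for w
    by (rule L2_measurable_subalgebra[OF Filt_subalgebra_le]) auto
  have xo: "L2_measurable M (Filt (Suc K)) (spds_xout x0 T xs (Suc K))"
    using iter[of "T (Suc K)"] by (simp add: spds_xout_def[abs_def])
  have xh: "L2_measurable M (Filt (Suc K)) (spds_xhat x0 T xs (Suc K))"
    unfolding spds_xhat_def[abs_def]
    using iter by (auto intro!: L2_measurable_scaleR[OF prob sub] L2_measurable_sum[OF prob sub])
  have "L2_measurable M (Filt (Suc K)) (xl (Suc (Suc K)))" if "Suc (Suc K) \<le> N"
  proof (rule L2_measurable_cong[OF sub])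
    show "L2_measurable M (Filt (Suc K)) (\<lambda>\<omega>. (1 / (1 + \<tau> (Suc (Suc K)))) *\<^sub>R
        (spds_xout x0 T xs (Suc K) \<omega> + lam (Suc (Suc K)) *\<^sub>R (spds_xhat x0 T xs (Suc K) \<omega>
          - spds_xout x0 T xs K \<omega>) + \<tau> (Suc (Suc K)) *\<^sub>R xl (Suc K) \<omega>))"
      using prev K xo xh lift unfolding round_L2_def
      by (intro L2_measurable_scaleR[OF prob sub] L2_measurable_add[OF sub] L2_measurable_diff[OF prob sub])
        auto
    show "\<omega> \<in> space M \<Longrightarrow> (1 / (1 + \<tau> (Suc (Suc K)))) *\<^sub>R (spds_xout x0 T xs (Suc K) \<omega>
        + lam (Suc (Suc K)) *\<^sub>R (spds_xhat x0 T xs (Suc K) \<omega> - spds_xout x0 T xs K \<omega>)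
        + \<tau> (Suc (Suc K)) *\<^sub>R xl (Suc K) \<omega>) = xl (Suc (Suc K)) \<omega>" for \<omega>
      using bspec[OF xl_step, of "Suc (Suc K)"] that by (simp add: spds_xtilde_def)
  qed
  moreover have "L2_measurable M (Filt (Suc K)) (z_out (Suc K))"
    using iter[of "T (Suc K)"] by (simp add: z_out_def[abs_def])
  moreover have "L2_measurable M (Filt (Suc K)) (spds_xprev x0 T xs (Suc (Suc K)))"
    using iter[of "T (Suc K) - 1"] by (simp add: spds_xprev_def[abs_def])
  ultimately show ?thesis
    using xo xh by (simp add: round_L2_def)
qed

lemma round_L2: "K \<le> N \<Longrightarrow> round_L2 K"
  by (induction K) (auto intro: round_L2_0 round_L2_Suc)

lemma gradient_noise_moments:
  assumes k: "k \<in> {1..N}"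
  shows "(\<integral>\<omega>. (norm (v k \<omega> - G (xl k \<omega>)))\<^sup>2 \<partial>M) \<le> \<sigma>\<^sup>2 / real (c k)"
    and "integrable M (\<lambda>\<omega>. inner (v k \<omega> - G (xl k \<omega>)) (xstar - spds_xout x0 T xs (k - 1) \<omega>))"
    and "(\<integral>\<omega>. inner (v k \<omega> - G (xl k \<omega>)) (xstar - spds_xout x0 T xs (k - 1) \<omega>) \<partial>M) = 0"
proof -
  interpret sigma_finite_subalgebra M "Filt (k - 1)"
    using Filt_sigma_finite by blast
  note sub = Filt_subalgebra[of "k - 1"]
  have prev: "round_L2 (k - 1)" using k by (intro round_L2) auto
  then have xl: "L2_measurable M (Filt (k - 1)) (xl k)"
    and xo: "L2_measurable M (Filt (k - 1)) (spds_xout x0 T xs (k - 1))"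
    using k by (auto simp: round_L2_def)
  have "L2_measurable M M (v k)"
    using v_L2_measurable[OF k xl] by (rule L2_measurable_subalgebra[OF Filt_subalgebra, rotated])
  moreover have "L2_measurable M (Filt (k - 1)) (\<lambda>\<omega>. G (xl k \<omega>))"
    by (rule L2_measurable_G[OF sub xl])
  then have "L2_measurable M M (\<lambda>\<omega>. G (xl k \<omega>))"
    by (rule L2_measurable_subalgebra[OF sub, rotated])
  moreover have "L2_measurable M (Filt (k - 1)) (\<lambda>\<omega>. xstar - spds_xout x0 T xs (k - 1) \<omega>)"
    by (rule L2_measurable_diff[OF prob sub L2_measurable_const[OF prob sub] xo])
  ultimately show "integrable M (\<lambda>\<omega>. inner (v k \<omega> - G (xl k \<omega>)) (xstar - spds_xout x0 T xs (k - 1) \<omega>))"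
    and "(\<integral>\<omega>. inner (v k \<omega> - G (xl k \<omega>)) (xstar - spds_xout x0 T xs (k - 1) \<omega>) \<partial>M) = 0"
    using bspec[OF v_unbiased k] by (auto intro: integral_inner_cond_exp_zero)
  show "(\<integral>\<omega>. (norm (v k \<omega> - G (xl k \<omega>)))\<^sup>2 \<partial>M) \<le> \<sigma>\<^sup>2 / real (c k)"
    using bspec[OF v_var_integrable k] bspec[OF v_var k] by (rule integral_le_of_cond_exp_le[OF prob])
qed

lemma noise_integrable: "integrable M noise"
  unfolding noise_def
  using v_var_integrable gradient_noise_moments(2) by (auto intro!: Bochner_Integration.integrable_sum)

lemma integral_noise_le: "(\<integral>\<omega>. noise \<omega> \<partial>M) \<le> (\<Sum>k\<in>{1..N}. \<beta> k * \<sigma>\<^sup>2 / (p k * real (c k)))"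
proof -
  have "(\<integral>\<omega>. noise \<omega> \<partial>M) = (\<Sum>k\<in>{1..N}. \<beta> k * ((\<integral>\<omega>. (norm (v k \<omega> - G (xl k \<omega>)))\<^sup>2 \<partial>M) / p k
      + (\<integral>\<omega>. inner (v k \<omega> - G (xl k \<omega>)) (xstar - spds_xout x0 T xs (k - 1) \<omega>) \<partial>M)))"
    unfolding noise_def using v_var_integrable gradient_noise_moments(2)
    by (auto simp: Bochner_Integration.integral_sum Bochner_Integration.integral_add intro!: sum.cong)
  also have "\<dots> \<le> (\<Sum>k\<in>{1..N}. \<beta> k * \<sigma>\<^sup>2 / (p k * real (c k)))"
  proof (rule sum_mono)
    fix k assume k: "k \<in> {1..N}"
    have \<beta>: "0 < \<beta> k" and p: "0 < p k" using bspec[OF \<beta>_pos k] bspec[OF p_pos k] by simp_all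
    have "(\<integral>\<omega>. (norm (v k \<omega> - G (xl k \<omega>)))\<^sup>2 \<partial>M) / p k \<le> \<sigma>\<^sup>2 / real (c k) / p k"
      using divide_right_mono[OF gradient_noise_moments(1)[OF k], of "p k"] p by simp
    from mult_left_mono[OF this less_imp_le[OF \<beta>]]
    show "\<beta> k * ((\<integral>\<omega>. (norm (v k \<omega> - G (xl k \<omega>)))\<^sup>2 \<partial>M) / p k
        + (\<integral>\<omega>. inner (v k \<omega> - G (xl k \<omega>)) (xstar - spds_xout x0 T xs (k - 1) \<omega>) \<partial>M))
      \<le> \<beta> k * \<sigma>\<^sup>2 / (p k * real (c k))"
      using gradient_noise_moments(3)[OF k] by (simp add: ac_simps)
  qed
  finally show ?thesis .
qed

lemma x_avg_measurable: "x_avg \<in> borel_measurable M"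
proof -
  have "spds_xhat x0 T xs k \<in> borel_measurable M" if "k \<in> {1..N}" for k
    using round_L2[of k] that Filt_subalgebra[of k]
    by (auto simp: round_L2_def intro: L2_measurable_borel_measurable)
  then show ?thesis
    unfolding x_avg_def[abs_def] by measurable
qed

lemma x_avg_in_S:
  assumes \<omega>: "\<omega> \<in> space M"
  shows "x_avg \<omega> \<in> S"
proof -
  have "spds_xhat x0 T xs k \<omega> \<in> S" if k: "k \<in> {1..N}" for k
  proof -
    have T: "1 \<le> T k" using T_pos k by auto
    have "xs k t \<omega> \<in> S" if "t \<in> {1..T k}" for t
      using bspec[OF bspec[OF bspec[OF xs_step k] that] \<omega>] by (simp add: is_arg_min_def)
    then have "(\<Sum>t\<in>{1..T k}. (1 / real (T k)) *\<^sub>R xs k t \<omega>) \<in> S"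
      using T by (intro convex_sum[OF _ S_convex]) auto
    then show ?thesis
      using k by (simp add: spds_xhat_def scaleR_sum_right)
  qed
  then have "(\<Sum>k\<in>{1..N}. (\<beta> k / (\<Sum>k\<in>{1..N}. \<beta> k)) *\<^sub>R spds_xhat x0 T xs k \<omega>) \<in> S"
    using \<beta>_pos \<beta>_sum_pos
    by (intro convex_sum[OF _ S_convex]) (auto simp: sum_divide_distrib[symmetric] less_imp_le)
  then show ?thesis
    by (simp add: x_avg_def scaleR_sum_right)
qed

lemma objective_continuous: "continuous_on UNIV (\<lambda>x. F x + \<mu> * \<Omega> x)"
proof -
  have "continuous_on UNIV F"
    using F_gradient by (intro continuous_at_imp_continuous_on) (auto intro: has_derivative_continuous)
  moreover have "continuous_on UNIV \<Omega>"
    using strongly_convex_on_imp_convex_on[OF \<Omega>_strongly_convex] by (intro convex_on_continuous) auto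
  ultimately show ?thesis
    by (intro continuous_intros)
qed

lemma dual_init_weight_nonneg: "0 \<le> \<beta> 1 * q 1 1 / (2 * real (T 1))"
proof -
  have 1: "1 \<in> {1..N}" using N_pos by simp
  then have "1 \<le> T 1" using T_pos by blast
  with 1 have "0 < \<beta> 1" "0 < q 1 1"
    using bspec[OF \<beta>_pos 1] bspec[OF bspec[OF q_pos 1], of 1] by simp_all
  with \<open>1 \<le> T 1\<close> show ?thesis by simp
qed

lemma objective_gap_ge:
  assumes \<omega>: "\<omega> \<in> space M"
  shows "- (norm zstar * norm (A (x_avg \<omega>))) \<le> F (x_avg \<omega>) + \<mu> * \<Omega> (x_avg \<omega>) - (F xstar + \<mu> * \<Omega> xstar)"
  using saddle_lower_bound[OF x_avg_in_S[OF \<omega>]] norm_cauchy_schwarz[of "A (x_avg \<omega>)" zstar]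
  by (simp add: mult.commute)

text \<open>Testing the pointwise bound against the dual point \<open>z = (\<parallel>z\<^sup>*\<parallel> + 1) A x / \<parallel>A x\<parallel>\<close> turns the saddle
  lower bound on the objective gap into a bound on the infeasibility \<open>\<parallel>A x\<parallel>\<close>.\<close>
lemma feasibility_le_pointwise:
  assumes \<omega>: "\<omega> \<in> space M"
  shows "(\<Sum>k\<in>{1..N}. \<beta> k) * norm (A (x_avg \<omega>))
    \<le> \<beta> 1 / 2 * (\<eta> 1 1 / real (T 1) + p 1) * (norm (x0 - xstar))\<^sup>2
      + \<beta> 1 * q 1 1 / (2 * real (T 1)) * (norm zstar + 1)\<^sup>2 + noise \<omega>"
proof -
  define a where "a = A (x_avg \<omega>)"
  define \<zeta> where "\<zeta> = norm zstar + 1"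
  define z where "z = (if a = 0 then 0 else (\<zeta> / norm a) *\<^sub>R a)"
  have za: "inner a z = \<zeta> * norm a"
    by (simp add: z_def power2_norm_eq_inner[symmetric] power2_eq_square)
  have "norm z \<le> \<zeta>" by (simp add: z_def \<zeta>_def)
  then have "\<beta> 1 * q 1 1 / (2 * real (T 1)) * (norm z)\<^sup>2 \<le> \<beta> 1 * q 1 1 / (2 * real (T 1)) * \<zeta>\<^sup>2"
    using dual_init_weight_nonneg by (intro mult_left_mono power_mono) auto
  moreover have "(\<Sum>k\<in>{1..N}. \<beta> k) * norm a
      \<le> (\<Sum>k\<in>{1..N}. \<beta> k) * (F (x_avg \<omega>) + \<mu> * \<Omega> (x_avg \<omega>) - (F xstar + \<mu> * \<Omega> xstar) + inner a z)"
    using objective_gap_ge[OF \<omega>, folded a_def] \<beta>_sum_pos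
    by (intro mult_left_mono) (auto simp: za \<zeta>_def algebra_simps)
  ultimately show ?thesis
    using gap_le_pointwise[OF \<omega>, of z] unfolding a_def \<zeta>_def by linarith
qed

definition "gap_bound \<omega> = (\<beta> 1 / 2 * (\<eta> 1 1 / real (T 1) + p 1) * (norm (x0 - xstar))\<^sup>2
  + \<beta> 1 * q 1 1 / (2 * real (T 1)) * (norm zstar + 1)\<^sup>2 + noise \<omega>) / (\<Sum>k\<in>{1..N}. \<beta> k)"

lemma gap_bound_integrable: "integrable M gap_bound"
proof -
  interpret prob_space M by (rule prob)
  show ?thesis
    unfolding gap_bound_def[abs_def] using noise_integrable by simp
qed

lemma feasibility_le_gap_bound: "\<omega> \<in> space M \<Longrightarrow> norm (A (x_avg \<omega>)) \<le> gap_bound \<omega>"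
  using feasibility_le_pointwise \<beta>_sum_pos by (simp add: gap_bound_def field_simps)

lemma objective_gap_le:
  assumes \<omega>: "\<omega> \<in> space M"
  shows "F (x_avg \<omega>) + \<mu> * \<Omega> (x_avg \<omega>) - (F xstar + \<mu> * \<Omega> xstar)
    \<le> (\<beta> 1 / 2 * (\<eta> 1 1 / real (T 1) + p 1) * (norm (x0 - xstar))\<^sup>2 + noise \<omega>) / (\<Sum>k\<in>{1..N}. \<beta> k)"
  using gap_le_pointwise[OF \<omega>, of 0] \<beta>_sum_pos by (simp add: field_simps)

lemma abs_objective_gap_le_gap_bound:
  assumes \<omega>: "\<omega> \<in> space M"
  shows "\<bar>F (x_avg \<omega>) + \<mu> * \<Omega> (x_avg \<omega>) - (F xstar + \<mu> * \<Omega> xstar)\<bar> \<le> (1 + norm zstar) * gap_bound \<omega>"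
    (is "\<bar>?gap\<bar> \<le> _")
proof -
  have b: "0 \<le> gap_bound \<omega>" using feasibility_le_gap_bound[OF \<omega>] norm_ge_zero order_trans by blast
  have "(\<beta> 1 / 2 * (\<eta> 1 1 / real (T 1) + p 1) * (norm (x0 - xstar))\<^sup>2 + noise \<omega>) / (\<Sum>k\<in>{1..N}. \<beta> k)
      \<le> gap_bound \<omega>"
    using mult_nonneg_nonneg[OF dual_init_weight_nonneg zero_le_power2] \<beta>_sum_pos
    unfolding gap_bound_def by (intro divide_right_mono) auto
  moreover have "norm zstar * norm (A (x_avg \<omega>)) \<le> norm zstar * gap_bound \<omega>"
    using feasibility_le_gap_bound[OF \<omega>] by (simp add: mult_left_mono)
  moreover have "0 \<le> norm zstar * gap_bound \<omega>" using b by simp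
  moreover note objective_gap_le[OF \<omega>] objective_gap_ge[OF \<omega>]
  ultimately have "?gap \<le> gap_bound \<omega> + norm zstar * gap_bound \<omega>"
    "- (gap_bound \<omega> + norm zstar * gap_bound \<omega>) \<le> ?gap"
    using b by linarith+
  then show ?thesis
    by (simp add: abs_le_iff distrib_right)
qed

lemma objective_gap_integrable:
  "integrable M (\<lambda>\<omega>. F (x_avg \<omega>) + \<mu> * \<Omega> (x_avg \<omega>) - (F xstar + \<mu> * \<Omega> xstar))"
proof (rule Bochner_Integration.integrable_bound)
  show "integrable M (\<lambda>\<omega>. (1 + norm zstar) * gap_bound \<omega>)"
    using gap_bound_integrable by simp
  have "(\<lambda>\<omega>. F (x_avg \<omega>) + \<mu> * \<Omega> (x_avg \<omega>)) \<in> borel_measurable M"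
    using borel_measurable_continuous_on[OF objective_continuous x_avg_measurable] by simp
  then show "(\<lambda>\<omega>. F (x_avg \<omega>) + \<mu> * \<Omega> (x_avg \<omega>) - (F xstar + \<mu> * \<Omega> xstar)) \<in> borel_measurable M"
    by measurable
  show "AE \<omega> in M. norm (F (x_avg \<omega>) + \<mu> * \<Omega> (x_avg \<omega>) - (F xstar + \<mu> * \<Omega> xstar))
      \<le> norm ((1 + norm zstar) * gap_bound \<omega>)"
    using abs_objective_gap_le_gap_bound by (auto intro!: AE_I2 order_trans[OF _ abs_ge_self])
qed

lemma feasibility_integrable: "integrable M (\<lambda>\<omega>. norm (A (x_avg \<omega>)))"
proof (rule Bochner_Integration.integrable_bound[OF gap_bound_integrable])
  have "(\<lambda>\<omega>. A (x_avg \<omega>)) \<in> borel_measurable M"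
    by (rule borel_measurable_continuous_on[OF linear_continuous_on[OF A_bounded_linear] x_avg_measurable])
  then show "(\<lambda>\<omega>. norm (A (x_avg \<omega>))) \<in> borel_measurable M"
    by measurable
  show "AE \<omega> in M. norm (norm (A (x_avg \<omega>))) \<le> norm (gap_bound \<omega>)"
    using feasibility_le_gap_bound by (auto intro!: AE_I2 order_trans[OF _ abs_ge_self])
qed

theorem expected_gap_and_feasibility:
  "integrable M (\<lambda>\<omega>. F (x_avg \<omega>) + \<mu> * \<Omega> (x_avg \<omega>) - (F xstar + \<mu> * \<Omega> xstar))
   \<and> (\<integral>\<omega>. F (x_avg \<omega>) + \<mu> * \<Omega> (x_avg \<omega>) - (F xstar + \<mu> * \<Omega> xstar) \<partial>M)
       \<le> (1 / (\<Sum>k\<in>{1..N}. \<beta> k)) *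
          (\<beta> 1 / 2 * (\<eta> 1 1 / real (T 1) + p 1) * (norm (x0 - xstar))\<^sup>2
           + (\<Sum>k\<in>{1..N}. \<beta> k * \<sigma>\<^sup>2 / (p k * real (c k))))
   \<and> integrable M (\<lambda>\<omega>. norm (A (x_avg \<omega>)))
   \<and> (\<integral>\<omega>. norm (A (x_avg \<omega>)) \<partial>M)
       \<le> (1 / (\<Sum>k\<in>{1..N}. \<beta> k)) *
          (\<beta> 1 * q 1 1 / (2 * real (T 1)) * (norm zstar + 1)\<^sup>2
           + \<beta> 1 / 2 * (\<eta> 1 1 / real (T 1) + p 1) * (norm (x0 - xstar))\<^sup>2
           + (\<Sum>k\<in>{1..N}. \<beta> k * \<sigma>\<^sup>2 / (p k * real (c k))))"
proof -
  interpret prob_space M by (rule prob)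
  define B where "B = (\<Sum>k\<in>{1..N}. \<beta> k)"
  define I0 where "I0 = \<beta> 1 / 2 * (\<eta> 1 1 / real (T 1) + p 1) * (norm (x0 - xstar))\<^sup>2"
  define Iz where "Iz = \<beta> 1 * q 1 1 / (2 * real (T 1)) * (norm zstar + 1)\<^sup>2"
  have B: "0 < B" unfolding B_def by (rule \<beta>_sum_pos)
  have "(\<integral>\<omega>. F (x_avg \<omega>) + \<mu> * \<Omega> (x_avg \<omega>) - (F xstar + \<mu> * \<Omega> xstar) \<partial>M)
      \<le> (\<integral>\<omega>. (I0 + noise \<omega>) / B \<partial>M)"
    using objective_gap_integrable noise_integrable objective_gap_le
    by (intro integral_mono) (auto simp: I0_def B_def)
  also have "\<dots> = (I0 + (\<integral>\<omega>. noise \<omega> \<partial>M)) / B"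
    using noise_integrable by (simp add: prob_space)
  finally have gap: "(\<integral>\<omega>. F (x_avg \<omega>) + \<mu> * \<Omega> (x_avg \<omega>) - (F xstar + \<mu> * \<Omega> xstar) \<partial>M)
      \<le> (I0 + (\<integral>\<omega>. noise \<omega> \<partial>M)) / B" .
  have "(\<integral>\<omega>. norm (A (x_avg \<omega>)) \<partial>M) \<le> (\<integral>\<omega>. gap_bound \<omega> \<partial>M)"
    using feasibility_integrable gap_bound_integrable feasibility_le_gap_bound by (intro integral_mono) auto
  also have "\<dots> = (Iz + I0 + (\<integral>\<omega>. noise \<omega> \<partial>M)) / B"
    unfolding gap_bound_def[abs_def] using noise_integrable by (simp add: prob_space I0_def Iz_def B_def add_ac)
  finally have "(\<integral>\<omega>. norm (A (x_avg \<omega>)) \<partial>M) \<le> (Iz + I0 + (\<integral>\<omega>. noise \<omega> \<partial>M)) / B" .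
  with gap integral_noise_le B show ?thesis
    using objective_gap_integrable feasibility_integrable unfolding B_def I0_def Iz_def
    by (auto simp: divide_right_mono field_simps intro: order_trans)
qed

end

section \<open>Separable functions on stacked vectors\<close>

lemma power2_norm_vec: "(norm (x :: 'a::real_normed_vector ^ 'n::finite))\<^sup>2 = (\<Sum>i\<in>UNIV. (norm (x $ i))\<^sup>2)"
  unfolding norm_vec_def L2_set_def by (simp add: sum_nonneg)

lemma strongly_convex_on_vec_sum:
  fixes f :: "'n::finite \<Rightarrow> 'a::real_normed_vector \<Rightarrow> real"
  assumes "\<forall>i. strongly_convex_on UNIV m (f i)"
  shows "strongly_convex_on UNIV m (\<lambda>x::'a^'n. \<Sum>i\<in>UNIV. f i (x $ i))"
  unfolding strongly_convex_on_def
proof (intro conjI ballI allI impI convex_UNIV)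
  fix x y :: "'a^'n" and \<theta> :: real assume \<theta>: "0 \<le> \<theta> \<and> \<theta> \<le> 1"
  have "(\<Sum>i\<in>UNIV. f i ((\<theta> *\<^sub>R x + (1 - \<theta>) *\<^sub>R y) $ i))
      \<le> (\<Sum>i\<in>UNIV. \<theta> * f i (x $ i) + (1 - \<theta>) * f i (y $ i) - m / 2 * \<theta> * (1 - \<theta>) * (norm (x $ i - y $ i))\<^sup>2)"
    using assms \<theta> by (intro sum_mono) (simp add: strongly_convex_on_def)
  also have "\<dots> = \<theta> * (\<Sum>i\<in>UNIV. f i (x $ i)) + (1 - \<theta>) * (\<Sum>i\<in>UNIV. f i (y $ i))
      - m / 2 * \<theta> * (1 - \<theta>) * (norm (x - y))\<^sup>2"
    by (simp add: power2_norm_vec sum.distrib sum_subtractf sum_distrib_left)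
  finally show "(\<Sum>i\<in>UNIV. f i ((\<theta> *\<^sub>R x + (1 - \<theta>) *\<^sub>R y) $ i))
      \<le> \<theta> * (\<Sum>i\<in>UNIV. f i (x $ i)) + (1 - \<theta>) * (\<Sum>i\<in>UNIV. f i (y $ i))
        - m / 2 * \<theta> * (1 - \<theta>) * (norm (x - y))\<^sup>2" .
qed

lemma convex_on_vec_sum:
  fixes f :: "'n::finite \<Rightarrow> 'a::real_vector \<Rightarrow> real"
  assumes "\<forall>i. convex_on UNIV (f i)"
  shows "convex_on UNIV (\<lambda>x::'a^'n. \<Sum>i\<in>UNIV. f i (x $ i))"
proof (rule convex_onI)
  fix t :: real and x y :: "'a^'n" assume t: "0 < t" "t < 1"
  have "(\<Sum>i\<in>UNIV. f i (((1 - t) *\<^sub>R x + t *\<^sub>R y) $ i))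
      \<le> (\<Sum>i\<in>UNIV. (1 - t) * f i (x $ i) + t * f i (y $ i))"
  proof (rule sum_mono)
    fix i
    show "f i (((1 - t) *\<^sub>R x + t *\<^sub>R y) $ i) \<le> (1 - t) * f i (x $ i) + t * f i (y $ i)"
      using convex_onD[OF assms[rule_format], of t "x $ i" "y $ i"] t by simp
  qed
  then show "(\<Sum>i\<in>UNIV. f i (((1 - t) *\<^sub>R x + t *\<^sub>R y) $ i))
      \<le> (1 - t) * (\<Sum>i\<in>UNIV. f i (x $ i)) + t * (\<Sum>i\<in>UNIV. f i (y $ i))"
    by (simp add: sum.distrib sum_distrib_left)
qed simp

lemma has_derivative_vec_sum:
  fixes f :: "'n::finite \<Rightarrow> 'a::real_inner \<Rightarrow> real"
  assumes "\<forall>i u. (f i has_derivative (\<lambda>h. inner (g i u) h)) (at u)"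
  shows "((\<lambda>x::'a^'n. \<Sum>i\<in>UNIV. f i (x $ i)) has_derivative (\<lambda>h. inner (\<chi> i. g i (u $ i)) h)) (at u)"
proof -
  have "((\<lambda>x::'a^'n. f i (x $ i)) has_derivative (\<lambda>h. inner (g i (u $ i)) (h $ i))) (at u)" for i
    using has_derivative_compose[OF bounded_linear_imp_has_derivative[OF bounded_linear_vec_nth,
          where net = "at u"] assms[rule_format, of i "u $ i"]]
    by (simp add: o_def)
  then have "((\<lambda>x::'a^'n. \<Sum>i\<in>UNIV. f i (x $ i)) has_derivative
      (\<lambda>h. \<Sum>i\<in>UNIV. inner (g i (u $ i)) (h $ i))) (at u)"
    by (intro has_derivative_sum)
  then show ?thesis
    by (simp add: inner_vec_def)
qed

lemma norm_vec_map_diff_le: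
  fixes g :: "'n::finite \<Rightarrow> 'a::real_normed_vector \<Rightarrow> 'b::real_normed_vector"
  assumes "\<forall>i u w. norm (g i u - g i w) \<le> L * norm (u - w)" and "0 \<le> L"
  shows "norm ((\<chi> i. g i (u $ i)) - (\<chi> i. g i (w $ i))) \<le> L * norm (u - w)"
proof -
  have "(norm ((\<chi> i. g i (u $ i)) - (\<chi> i. g i (w $ i))))\<^sup>2 = (\<Sum>i\<in>UNIV. (norm (g i (u $ i) - g i (w $ i)))\<^sup>2)"
    by (simp add: power2_norm_vec)
  also have "\<dots> \<le> (\<Sum>i\<in>UNIV. (L * norm (u $ i - w $ i))\<^sup>2)"
    using assms by (intro sum_mono power_mono) auto
  also have "\<dots> = (L * norm (u - w))\<^sup>2"
    by (simp add: power2_norm_vec power_mult_distrib sum_distrib_left)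
  finally show ?thesis
    using assms(2) by (simp add: power2_le_iff_abs_le)
qed

lemma lipschitz_constant_nonneg:
  fixes g :: "'a::euclidean_space \<Rightarrow> 'b::real_normed_vector"
  assumes "\<And>u w. norm (g u - g w) \<le> L * norm (u - w)"
  shows "0 \<le> L"
proof -
  obtain u :: 'a where "norm u = 1" using vector_choose_size[of 1] by auto
  then have "norm (g u - g 0) \<le> L" using assms[of u 0] by simp
  then show ?thesis using norm_ge_zero order_trans by blast
qed

lemma bounded_linear_kron_op: "bounded_linear (kron_op K :: real^'d::finite^'n::finite \<Rightarrow> real^'d^'m::finite)"
proof -
  have "linear (kron_op K :: real^'d^'n \<Rightarrow> real^'d^'m)"
    unfolding kron_op_def
    by (rule linearI) (simp_all add: vec_eq_iff sum.distrib scaleR_add_right scaleR_sum_right ac_simps)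
  then show ?thesis
    by (simp add: linear_conv_bounded_linear)
qed

lemma inner_kron_op:
  fixes K :: "'m::finite \<Rightarrow> 'n::finite \<Rightarrow> real"
  shows "inner (kron_op K (x :: real^'d::finite^'n)) z = inner x (kron_op (transp_mat K) z)"
proof -
  have "inner (kron_op K x) z = (\<Sum>j\<in>UNIV. \<Sum>i\<in>UNIV. K j i * inner (x $ i) (z $ j))"
    unfolding kron_op_def inner_vec_def[of "vec_lambda _"] by (simp add: inner_sum_left)
  also have "\<dots> = (\<Sum>i\<in>UNIV. \<Sum>j\<in>UNIV. K j i * inner (x $ i) (z $ j))"
    by (rule sum.swap)
  also have "\<dots> = inner x (kron_op (transp_mat K) z)"
    unfolding kron_op_def transp_mat_def inner_vec_def[of x] by (simp add: inner_sum_right)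
  finally show ?thesis .
qed

lemma inner_Basis_vec_vec:
  assumes "b \<in> (Basis :: (real^'d::finite^'n::finite) set)"
  obtains i j where "\<And>x. inner x b = x $ i $ j"
proof -
  from assms obtain i u where "b = axis i u" "u \<in> (Basis :: (real^'d) set)"
    by (auto simp: Basis_vec_def)
  moreover from this(2) obtain j where "u = axis j 1"
    by (auto simp: Basis_vec_def)
  ultimately have "\<And>x. inner x b = x $ i $ j"
    by (simp add: inner_axis)
  then show ?thesis
    by (rule that)
qed

lemma real_cond_exp_inner_Basis_vec_vec:
  fixes v y :: "'a \<Rightarrow> real^'d::finite^'n::finite"
  assumes "\<forall>i j. AE \<omega> in M. real_cond_exp M F (\<lambda>\<omega>. v \<omega> $ i $ j) \<omega> = y \<omega> $ i $ j"
  shows "\<forall>b\<in>Basis. AE \<omega> in M. real_cond_exp M F (\<lambda>\<omega>. inner (v \<omega>) b) \<omega> = inner (y \<omega>) b"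
proof
  fix b :: "real^'d^'n" assume "b \<in> Basis"
  then obtain i j where "\<And>x. inner x b = x $ i $ j"
    using inner_Basis_vec_vec by blast
  then show "AE \<omega> in M. real_cond_exp M F (\<lambda>\<omega>. inner (v \<omega>) b) \<omega> = inner (y \<omega>) b"
    using assms by simp
qed

theorem proposition3p1:
  fixes E :: "('n::finite \<times> 'n) set"
    and K :: "'m::finite \<Rightarrow> 'n \<Rightarrow> real"
    and X :: "'n \<Rightarrow> (real^'d::finite) set"
    and ft \<nu> :: "'n \<Rightarrow> real^'d \<Rightarrow> real"
    and gradf :: "'n \<Rightarrow> real^'d \<Rightarrow> real^'d"
    and Lt \<mu> \<sigma> :: real
    and xstar :: "real^'d^'n" and zstar :: "real^'d^'m"
    and M :: "'a measure" and F :: "nat \<Rightarrow> 'a measure"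
    and N :: nat and T c :: "nat \<Rightarrow> nat"
    and \<beta> p lam \<tau> :: "nat \<Rightarrow> real" and q \<eta> \<alpha> :: "nat \<Rightarrow> nat \<Rightarrow> real"
    and x0 xl0 :: "real^'d^'n"
    and xs :: "nat \<Rightarrow> nat \<Rightarrow> 'a \<Rightarrow> real^'d^'n"
    and zs :: "nat \<Rightarrow> nat \<Rightarrow> 'a \<Rightarrow> real^'d^'m"
    and xl v :: "nat \<Rightarrow> 'a \<Rightarrow> real^'d^'n"
  defines "Xset \<equiv> {x :: real^'d^'n. \<forall>i. x $ i \<in> X i}"
    and "f \<equiv> (\<lambda>x :: real^'d^'n. (\<Sum>i\<in>UNIV. ft i (x $ i)) + \<mu> * (\<Sum>i\<in>UNIV. \<nu> i (x $ i)))"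
    and "A \<equiv> kron_op K :: real^'d^'n \<Rightarrow> real^'d^'m"
    and "At \<equiv> kron_op (transp_mat K) :: real^'d^'m \<Rightarrow> real^'d^'n"
    and "y \<equiv> (\<lambda>k \<omega>. \<chi> i. gradf i (xl k \<omega> $ i))"
    and "xbar \<equiv> (\<lambda>\<omega>. (1 / (\<Sum>k\<in>{1..N}. \<beta> k)) *\<^sub>R
                     (\<Sum>k\<in>{1..N}. \<beta> k *\<^sub>R spds_xhat x0 T xs k \<omega>))"
  (* problem data *)
  assumes graph: "connected_graph E"
    and A_choice: "is_laplacian_matrix E K \<or> is_incidence_transpose E K"
    and X_closed: "\<forall>i. closed (X i)" and X_convex: "\<forall>i. convex (X i)"
    and ft_convex: "\<forall>i. convex_on UNIV (ft i)"
    and ft_grad: "\<forall>i u. (ft i has_derivative (\<lambda>h. inner (gradf i u) h)) (at u)"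
    and ft_lip: "\<forall>i u w. norm (gradf i u - gradf i w) \<le> Lt * norm (u - w)"
    and nu_sc: "\<forall>i. strongly_convex_on UNIV 1 (\<nu> i)"
    and mu_nonneg: "\<mu> \<ge> 0"
    and saddle: "is_saddle_point Xset f A xstar zstar"
  (* parameters *)
    and N_pos: "N \<ge> 1"
    and T_pos: "\<forall>k\<in>{1..N}. T k \<ge> 1" and c_pos: "\<forall>k\<in>{1..N}. c k \<ge> 1"
    and \<beta>_pos: "\<forall>k\<in>{1..N}. \<beta> k > 0" and p_pos: "\<forall>k\<in>{1..N}. p k > 0"
    and q_pos: "\<forall>k\<in>{1..N}. \<forall>t\<in>{1..T k}. q k t > 0"
    and \<eta>_pos: "\<forall>k\<in>{1..N}. \<forall>t\<in>{1..T k}. \<eta> k t > 0"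
    and lam_nonneg: "\<forall>k\<in>{1..N}. lam k \<ge> 0" and \<tau>_nonneg: "\<forall>k\<in>{1..N}. \<tau> k \<ge> 0"
    and \<alpha>_nonneg: "\<forall>k\<in>{1..N}. \<forall>t\<in>{1..T k}. \<alpha> k t \<ge> 0"
  (* condition (i) *)
    and cond_i: "\<forall>k\<in>{2..N}.
        \<beta> k * \<tau> k \<le> \<beta> (k - 1) * (\<tau> (k - 1) + 1)
      \<and> \<beta> (k - 1) = \<beta> k * lam k
      \<and> 2 * Lt * lam k \<le> p (k - 1) * \<tau> k
      \<and> \<beta> k * real (T (k - 1)) * \<alpha> k 1 = \<beta> (k - 1) * real (T k)
      \<and> \<alpha> k 1 * (onorm A)\<^sup>2 \<le> \<eta> (k - 1) (T (k - 1)) * q k 1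
      \<and> \<beta> k * real (T (k - 1)) * q k 1 \<le> \<beta> (k - 1) * real (T k) * q (k - 1) (T (k - 1))
      \<and> \<beta> k * real (T (k - 1)) * (\<eta> k 1 + p k * real (T k))
          \<le> \<beta> (k - 1) * real (T k) * (\<mu> + \<eta> (k - 1) (T (k - 1)) + p (k - 1))"
  (* condition (ii) *)
    and cond_ii: "\<forall>k\<in>{1..N}. \<forall>t\<in>{2..T k}.
        \<alpha> k t = 1 \<and> (onorm A)\<^sup>2 \<le> \<eta> k (t - 1) * q k t \<and> q k t \<le> q k (t - 1)
      \<and> \<eta> k t \<le> \<mu> + \<eta> k (t - 1) + p k"
  (* condition (iii) *)
    and cond_iii: "\<tau> 1 = 0" "p N * (\<tau> N + 1) \<ge> 2 * Lt"
      "\<eta> N (T N) * q N (T N) \<ge> (onorm A)\<^sup>2"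
  (* stochastic oracle *)
    and prob: "prob_space M"
    and filt_sub: "\<forall>k. subalgebra M (F k)"
    and filt_sf: "\<forall>k. sigma_finite_subalgebra M (F k)"
    and filt_mono: "\<forall>k. sets (F k) \<subseteq> sets (F (Suc k))"
    and v_meas: "\<forall>k\<in>{1..N}. v k \<in> borel_measurable (F k)"
    and v_int: "\<forall>k\<in>{1..N}. integrable M (v k)"
    and v_var_int: "\<forall>k\<in>{1..N}. integrable M (\<lambda>\<omega>. (norm (v k \<omega> - y k \<omega>))\<^sup>2)"
    and v_unbiased: "\<forall>k\<in>{1..N}. \<forall>i j. AE \<omega> in M.
        real_cond_exp M (F (k - 1)) (\<lambda>\<omega>. v k \<omega> $ i $ j) \<omega> = y k \<omega> $ i $ j"
    and v_var: "\<forall>k\<in>{1..N}. AE \<omega> in M.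
        real_cond_exp M (F (k - 1)) (\<lambda>\<omega>. (norm (v k \<omega> - y k \<omega>))\<^sup>2) \<omega> \<le> \<sigma>\<^sup>2 / real (c k)"
  (* the SPDS recursion *)
    and x0_in: "x0 \<in> Xset" and xl0_in: "xl0 \<in> Xset"
    and xl_0: "\<forall>\<omega>. xl 0 \<omega> = xl0"
    and xl_step: "\<forall>k\<in>{1..N}. \<forall>\<omega>\<in>space M. xl k \<omega> =
        (1 / (1 + \<tau> k)) *\<^sub>R (spds_xtilde x0 T xs lam k \<omega> + \<tau> k *\<^sub>R xl (k - 1) \<omega>)"
    and xs_init: "\<forall>k\<in>{1..N}. \<forall>\<omega>\<in>space M. xs k 0 \<omega> = spds_xout x0 T xs (k - 1) \<omega>"
    and zs_init: "\<forall>k\<in>{1..N}. \<forall>\<omega>\<in>space M.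
        zs k 0 \<omega> = (if k = 1 then 0 else zs (k - 1) (T (k - 1)) \<omega>)"
    and zs_step: "\<forall>k\<in>{1..N}. \<forall>t\<in>{1..T k}. \<forall>\<omega>\<in>space M.
        zs k t \<omega> = zs k (t - 1) \<omega> + (1 / q k t) *\<^sub>R A (xs k (t - 1) \<omega> + \<alpha> k t *\<^sub>R
           (xs k (t - 1) \<omega> - (if t = 1 then spds_xprev x0 T xs k \<omega> else xs k (t - 2) \<omega>)))"
    and xs_step: "\<forall>k\<in>{1..N}. \<forall>t\<in>{1..T k}. \<forall>\<omega>\<in>space M.
        is_arg_min (\<lambda>x. \<mu> * (\<Sum>i\<in>UNIV. \<nu> i (x $ i)) + inner (v k \<omega> + At (zs k t \<omega>)) x
                       + \<eta> k t / 2 * (norm (xs k (t - 1) \<omega> - x))\<^sup>2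
                       + p k / 2 * (norm (spds_xout x0 T xs (k - 1) \<omega> - x))\<^sup>2)
                   (\<lambda>x. x \<in> Xset) (xs k t \<omega>)"
  shows "integrable M (\<lambda>\<omega>. f (xbar \<omega>) - f xstar)
     \<and> (\<integral>\<omega>. f (xbar \<omega>) - f xstar \<partial>M)
         \<le> (1 / (\<Sum>k\<in>{1..N}. \<beta> k)) *
            (\<beta> 1 / 2 * (\<eta> 1 1 / real (T 1) + p 1) * (norm (x0 - xstar))\<^sup>2
             + (\<Sum>k\<in>{1..N}. \<beta> k * \<sigma>\<^sup>2 / (p k * real (c k))))
     \<and> integrable M (\<lambda>\<omega>. norm (A (xbar \<omega>)))
     \<and> (\<integral>\<omega>. norm (A (xbar \<omega>)) \<partial>M)
         \<le> (1 / (\<Sum>k\<in>{1..N}. \<beta> k)) *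
            (\<beta> 1 * q 1 1 / (2 * real (T 1)) * (norm zstar + 1)\<^sup>2
             + \<beta> 1 / 2 * (\<eta> 1 1 / real (T 1) + p 1) * (norm (x0 - xstar))\<^sup>2
             + (\<Sum>k\<in>{1..N}. \<beta> k * \<sigma>\<^sup>2 / (p k * real (c k))))"
proof -
  have A: "bounded_linear A"
    unfolding A_def by (rule bounded_linear_kron_op)
  have At: "\<And>u z. inner (A u) z = inner u (At z)"
    unfolding A_def At_def by (rule inner_kron_op)
  have Lt: "0 \<le> Lt"
    using ft_lip by (intro lipschitz_constant_nonneg[of "gradf undefined"]) blast
  have "convex Xset"
    unfolding Xset_def using X_convex by (auto simp: convex_def)
  moreover have "\<forall>k\<in>{1..N}. \<forall>b\<in>Basis. AE \<omega> in M.
      real_cond_exp M (F (k - 1)) (\<lambda>\<omega>. inner (v k \<omega>) b) \<omega> = inner (\<chi> i. gradf i (xl k \<omega> $ i)) b"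
  proof
    fix k assume "k \<in> {1..N}"
    with v_unbiased show "\<forall>b\<in>Basis. AE \<omega> in M.
        real_cond_exp M (F (k - 1)) (\<lambda>\<omega>. inner (v k \<omega>) b) \<omega> = inner (\<chi> i. gradf i (xl k \<omega> $ i)) b"
      unfolding y_def by (intro real_cond_exp_inner_Basis_vec_vec) blast
  qed
  txt \<open>Not needed: the graph hypotheses, closedness of the \<open>X i\<close>, \<open>x0, xl0 \<in> Xset\<close>,
    \<open>1 \<le> c k\<close> and integrability of \<open>v k\<close>.\<close>
  ultimately interpret spds A At "\<lambda>x. \<Sum>i\<in>UNIV. ft i (x $ i)" "\<lambda>x. \<chi> i. gradf i (x $ i)" Lt
    "\<lambda>x. \<Sum>i\<in>UNIV. \<nu> i (x $ i)" \<mu> Xset xstar zstar M F \<sigma> N T c \<beta> p lam \<tau> q \<eta> \<alpha> x0 xl0 xs zs xl v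
    using A At convex_on_vec_sum[OF ft_convex] has_derivative_vec_sum[OF ft_grad]
      norm_vec_map_diff_le[OF ft_lip Lt] Lt strongly_convex_on_vec_sum[OF nu_sc]
      saddle[unfolded f_def] v_var_int[unfolded y_def] v_var[unfolded y_def] assms
    by (intro spds.intro) assumption+
  show ?thesis
    using expected_gap_and_feasibility unfolding f_def xbar_def x_avg_def[abs_def] .
qed

end
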